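(* Let $n\ge1$ and let $c:E_n\to\mathbb C$ be an admissible edge weighting of $Q_n$. (1) If $Q_n(c) = \bigcup_\ell Q_n^{(\ell)}$ for pairwise disjoint sub-hypercubes $Q_n^{(\ell)}\subset Q_n$, then $\rho_c$ is a direct sum of irreducible representations $\rho^{(\ell)}$, where $\rho^{(\ell)}(p_x)=0$ for all vertices $x\notin Q_n^{(\ell)}$. In particular, $\rho_c$ is irreducible if and only if $Q_n(c)$ is a single sub-hypercube of $Q_n$. (2) If $c':E_n\to\mathbb C$ is another admissible edge weighting, then $\rho_c$ and $\rho_{c'}$ are unitarily equivalent if and only if $Q_n(c')=Q_n(c)$ and there are $\lambda_x\in S^1$, $x\in U_n(c)\cup V_n(c)$, with $c'(ij) = \lambda_i\lambda_jc(ij)$ for all $ij\in E_n(c)$. (3) For every rank-one representation $\rho$ of $C^\ast(Q_n)$ on a Hilbert space $\mathcal H$ there exists an admissible edge weighting $c$ of $Q_n$ such that $\rho$ is unitarily equivalent to $\rho_c$.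
   Context: For $n\ge1$, identify integers $0\le i<2^n$ with their $n$-digit binary representations; $i\#k$ is $i$ with its $k$-th digit flipped. The hypercube $Q_n$ has vertex classes $U_n$ (even number of $1$'s) and $V_n$ (odd number of $1$'s) and edge set $E_n$ of pairs $ij$ ($i\in U_n$, $j\in V_n$, $j=i\#k$ for some $k<n$); $\mathcal N(x)$ denotes the neighbors of $x$. $C^\ast(Q_n)$ is the universal unital C*-algebra generated by projections $p_x$ ($x\in U_n\cup V_n$) with $\sum_{u\in U_n}p_u=1=\sum_{v\in V_n}p_v$ and $p_up_v=0$ for non-adjacent $u,v$. A representation $\rho$ is rank-one if each $\rho(p_x)$ is zero or a rank-one projection. For $c:E_n\to\mathbb{C}$, $Q_n(c)=(U_n(c),V_n(c),E_n(c))$ is the subgraph formed by the edges with $c(ij)\ne0$ and their endpoints; $c$ is admissible if $\sum_{i\in\mathcal N(j_1)\cap\mathcal N(j_2)}c(ij_1)\overline{c(ij_2)}=\delta_{j_1j_2}$ for $j_1,j_2\in V_n(c)$ and $\sum_{j\in\mathcal N(i_1)\cap\mathcal N(i_2)}c(i_1j)\overline{c(i_2j)}=\delta_{i_1i_2}$ for $i_1,i_2\in U_n(c)$. For admissible $c$, $\rho_c:C^\ast(Q_n)\to M_{U_n(c)}=B(\mathbb C^{U_n(c)})$ is the representation with $\rho_c(p_i)=E_{ii}$ ($i\in U_n(c)$), $\rho_c(p_j)$ the projection onto the span of the unit vector $(c(ij))_{i\in U_n(c)}$ ($j\in V_n(c)$, with $c(ij):=0$ for non-adjacent $i,j$), and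 $\rho_c(p_x)=0$ otherwise. A sub-hypercube of $Q_n$ is, for a set $K\subseteq\{0,\dots,n-1\}$ and a vertex $a$, the subgraph induced by all vertices agreeing with $a$ in every binary digit outside $K$. *)

theory Defs
  imports Complex_Main
begin

text \<open>Vertices are the integers 0 <= i < 2^n; the k-th binary digit of i is bit i k;
  i#k is flip_bit k i.\<close>

definition ones :: "nat \<Rightarrow> nat \<Rightarrow> nat" where
  "ones n i = card {k. k < n \<and> bit i k}"

definition Uv :: "nat \<Rightarrow> nat set" where
  "Uv n = {i. i < 2 ^ n \<and> even (ones n i)}"

definition Vv :: "nat \<Rightarrow> nat set" where
  "Vv n = {j. j < 2 ^ n \<and> odd (ones n j)}"

definition verts :: "nat \<Rightarrow> nat set" where
  "verts n = Uv n \<union> Vv n"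

definition Ed :: "nat \<Rightarrow> (nat \<times> nat) set" where
  "Ed n = {(i, j). i \<in> Uv n \<and> j \<in> Vv n \<and> (\<exists>k<n. j = flip_bit k i)}"

definition nbrs :: "nat \<Rightarrow> nat \<Rightarrow> nat set" where
  "nbrs n x = {y. (x, y) \<in> Ed n \<or> (y, x) \<in> Ed n}"

text \<open>An edge weighting c : E_n -> C is represented by a function c i j; only its values
  on edges (i,j) in E_n matter. ce extends it by 0 to non-adjacent pairs.\<close>

definition ce :: "nat \<Rightarrow> (nat \<Rightarrow> nat \<Rightarrow> complex) \<Rightarrow> nat \<Rightarrow> nat \<Rightarrow> complex" where
  "ce n c i j = (if (i, j) \<in> Ed n then c i j else 0)"

definition Ec :: "nat \<Rightarrow> (nat \<Rightarrow> nat \<Rightarrow> complex) \<Rightarrow> (nat \<times> nat) set" where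
  "Ec n c = {(i, j). (i, j) \<in> Ed n \<and> c i j \<noteq> 0}"

definition Uc :: "nat \<Rightarrow> (nat \<Rightarrow> nat \<Rightarrow> complex) \<Rightarrow> nat set" where
  "Uc n c = fst ` Ec n c"

definition Vc :: "nat \<Rightarrow> (nat \<Rightarrow> nat \<Rightarrow> complex) \<Rightarrow> nat set" where
  "Vc n c = snd ` Ec n c"

definition admissible :: "nat \<Rightarrow> (nat \<Rightarrow> nat \<Rightarrow> complex) \<Rightarrow> bool" where
  "admissible n c \<longleftrightarrow>
     (\<forall>j1\<in>Vc n c. \<forall>j2\<in>Vc n c.
        (\<Sum>i\<in>nbrs n j1 \<inter> nbrs n j2. c i j1 * cnj (c i j2)) = (if j1 = j2 then 1 else 0)) \<and>
     (\<forall>i1\<in>Uc n c. \<forall>i2\<in>Uc n c.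
        (\<Sum>j\<in>nbrs n i1 \<inter> nbrs n i2. c i1 j * cnj (c i2 j)) = (if i1 = i2 then 1 else 0))"

definition subcube_verts :: "nat \<Rightarrow> nat set \<Rightarrow> nat \<Rightarrow> nat set" where
  "subcube_verts n K a = {x. x < 2 ^ n \<and> (\<forall>k<n. k \<notin> K \<longrightarrow> bit x k = bit a k)}"

definition induced_edges :: "nat \<Rightarrow> nat set \<Rightarrow> (nat \<times> nat) set" where
  "induced_edges n X = {(i, j). (i, j) \<in> Ed n \<and> i \<in> X \<and> j \<in> X}"

definition is_subcube :: "nat \<Rightarrow> nat set \<Rightarrow> bool" where
  "is_subcube n X \<longleftrightarrow> (\<exists>K a. K \<subseteq> {..<n} \<and> a < 2 ^ n \<and> X = subcube_verts n K a)"

text \<open>A linear map C^I -> C^J is a function A :: 'j => 'i => complex vanishing outside J x I.\<close>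

definition mat_on :: "'j set \<Rightarrow> 'i set \<Rightarrow> ('j \<Rightarrow> 'i \<Rightarrow> complex) \<Rightarrow> bool" where
  "mat_on J I A \<longleftrightarrow> (\<forall>a b. a \<notin> J \<or> b \<notin> I \<longrightarrow> A a b = 0)"

definition mm :: "'k set \<Rightarrow> ('a \<Rightarrow> 'k \<Rightarrow> complex) \<Rightarrow> ('k \<Rightarrow> 'b \<Rightarrow> complex) \<Rightarrow> 'a \<Rightarrow> 'b \<Rightarrow> complex" where
  "mm K A B = (\<lambda>a b. \<Sum>k\<in>K. A a k * B k b)"

definition adj :: "('a \<Rightarrow> 'b \<Rightarrow> complex) \<Rightarrow> 'b \<Rightarrow> 'a \<Rightarrow> complex" where
  "adj A = (\<lambda>b a. cnj (A a b))"

definition idm :: "'a set \<Rightarrow> 'a \<Rightarrow> 'a \<Rightarrow> complex" where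
  "idm I = (\<lambda>a b. if a = b \<and> a \<in> I then 1 else 0)"

definition is_proj :: "'a set \<Rightarrow> ('a \<Rightarrow> 'a \<Rightarrow> complex) \<Rightarrow> bool" where
  "is_proj I P \<longleftrightarrow> mat_on I I P \<and> mm I P P = P \<and> adj P = P"

definition is_rank_one_proj :: "'a set \<Rightarrow> ('a \<Rightarrow> 'a \<Rightarrow> complex) \<Rightarrow> bool" where
  "is_rank_one_proj I P \<longleftrightarrow>
     (\<exists>v. (\<forall>a. a \<notin> I \<longrightarrow> v a = 0) \<and> (\<Sum>a\<in>I. (cmod (v a))\<^sup>2) = 1 \<and>
          P = (\<lambda>a b. v a * cnj (v b)))"

text \<open>By the universal property, a unital *-representation of C*(Q_n) on C^I is the same as
  a family of projections rho x (x a vertex) satisfying the defining relations.\<close>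

definition is_rep :: "nat \<Rightarrow> 'a set \<Rightarrow> (nat \<Rightarrow> 'a \<Rightarrow> 'a \<Rightarrow> complex) \<Rightarrow> bool" where
  "is_rep n I \<rho> \<longleftrightarrow>
     (\<forall>x\<in>verts n. is_proj I (\<rho> x)) \<and>
     (\<lambda>a b. \<Sum>u\<in>Uv n. \<rho> u a b) = idm I \<and> (\<lambda>a b. \<Sum>v\<in>Vv n. \<rho> v a b) = idm I \<and>
     (\<forall>u\<in>Uv n. \<forall>v\<in>Vv n. v \<notin> nbrs n u \<longrightarrow> mm I (\<rho> u) (\<rho> v) = (\<lambda>_ _. 0))"

definition is_rank_one_rep :: "nat \<Rightarrow> 'a set \<Rightarrow> (nat \<Rightarrow> 'a \<Rightarrow> 'a \<Rightarrow> complex) \<Rightarrow> bool" where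
  "is_rank_one_rep n I \<rho> \<longleftrightarrow>
     is_rep n I \<rho> \<and> (\<forall>x\<in>verts n. \<rho> x = (\<lambda>_ _. 0) \<or> is_rank_one_proj I (\<rho> x))"

definition unit_equiv ::
  "nat \<Rightarrow> 'a set \<Rightarrow> (nat \<Rightarrow> 'a \<Rightarrow> 'a \<Rightarrow> complex) \<Rightarrow> 'b set \<Rightarrow> (nat \<Rightarrow> 'b \<Rightarrow> 'b \<Rightarrow> complex) \<Rightarrow> bool" where
  "unit_equiv n I \<rho> J \<rho>' \<longleftrightarrow>
     (\<exists>U :: 'b \<Rightarrow> 'a \<Rightarrow> complex. mat_on J I U \<and> mm I U (adj U) = idm J \<and> mm J (adj U) U = idm I \<and>
        (\<forall>x\<in>verts n. mm I (mm I U (\<rho> x)) (adj U) = \<rho>' x))"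

text \<open>The subrepresentation of rho on the reducing subspace ran P (P an orthogonal projection
  commuting with rho) is irreducible: ran P is nonzero and has no nontrivial reducing subspace.\<close>
definition irreducible_on :: "nat \<Rightarrow> 'a set \<Rightarrow> ('a \<Rightarrow> 'a \<Rightarrow> complex) \<Rightarrow> (nat \<Rightarrow> 'a \<Rightarrow> 'a \<Rightarrow> complex) \<Rightarrow> bool" where
  "irreducible_on n I P \<rho> \<longleftrightarrow>
     P \<noteq> (\<lambda>_ _. 0) \<and>
     (\<forall>Q. is_proj I Q \<and> mm I Q P = Q \<and> (\<forall>x\<in>verts n. mm I Q (\<rho> x) = mm I (\<rho> x) Q)
          \<longrightarrow> Q = (\<lambda>_ _. 0) \<or> Q = P)"

definition irreducible :: "nat \<Rightarrow> 'a set \<Rightarrow> (nat \<Rightarrow> 'a \<Rightarrow> 'a \<Rightarrow> complex) \<Rightarrow> bool" where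
  "irreducible n I \<rho> \<longleftrightarrow> irreducible_on n I (idm I) \<rho>"

text \<open>rho is the (internal, orthogonal) direct sum of the subrepresentations rho^(X) = rho(.) P X
  for X in the index family Xs, with rho^(X)(p_x) = 0 for x not in X, each irreducible.\<close>
definition direct_sum_irred ::
  "nat \<Rightarrow> 'a set \<Rightarrow> (nat \<Rightarrow> 'a \<Rightarrow> 'a \<Rightarrow> complex) \<Rightarrow> nat set set \<Rightarrow> bool" where
  "direct_sum_irred n I \<rho> Xs \<longleftrightarrow>
     (\<exists>P :: nat set \<Rightarrow> 'a \<Rightarrow> 'a \<Rightarrow> complex.
        (\<forall>X\<in>Xs. is_proj I (P X)) \<and>
        (\<forall>X\<in>Xs. \<forall>Y\<in>Xs. X \<noteq> Y \<longrightarrow> mm I (P X) (P Y) = (\<lambda>_ _. 0)) \<and>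
        (\<lambda>a b. \<Sum>X\<in>Xs. P X a b) = idm I \<and>
        (\<forall>X\<in>Xs. \<forall>x\<in>verts n. mm I (P X) (\<rho> x) = mm I (\<rho> x) (P X)) \<and>
        (\<forall>X\<in>Xs. irreducible_on n I (P X) \<rho>) \<and>
        (\<forall>X\<in>Xs. \<forall>x\<in>verts n. x \<notin> X \<longrightarrow> mm I (\<rho> x) (P X) = (\<lambda>_ _. 0)))"

definition rho_c :: "nat \<Rightarrow> (nat \<Rightarrow> nat \<Rightarrow> complex) \<Rightarrow> nat \<Rightarrow> nat \<Rightarrow> nat \<Rightarrow> complex" where
  "rho_c n c x =
     (if x \<in> Uc n c then (\<lambda>a b. if a = x \<and> b = x then 1 else 0)
      else if x \<in> Vc n c then (\<lambda>a b. ce n c a x * cnj (ce n c b x))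
      else (\<lambda>_ _. 0))"

end

(*
  In \<open>\<rho>_c\<close> the even vertices act by the coordinate projections of \<open>\<complex>^{U_n(c)}\<close>, so a projection
  commuting with \<open>\<rho>_c\<close> is a coordinate projection, and commuting with the odd vertices forces its
  support to be a union of connected components of \<open>Q_n(c)\<close>.  Hence every connected component
  carries an irreducible summand, which gives (1) as soon as the components are sub-hypercubes.
  For admissible \<open>c\<close> they are: two columns \<open>x#k\<close>, \<open>x#l\<close> have exactly the common neighbours
  \<open>x\<close> and \<open>x#k#l\<close>, so orthogonality closes every square of \<open>Q_n\<close> two adjacent edges of which
  lie in \<open>Q_n(c)\<close>, and the component of a vertex is the sub-hypercube spanned by its edge
  directions.

  For (2), a unitary intertwining \<open>\<rho>_c\<close> and \<open>\<rho>_c'\<close> fixes all coordinate projections, hence is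
  diagonal with unimodular entries \<open>\<lambda>_i\<close>; the rank-one projections \<open>\<rho>(p_j)\<close> then determine the
  columns \<open>c'(\<cdot>,j)\<close> and \<open>\<lambda>_i c(\<cdot>,j)\<close> up to a phase \<open>\<lambda>_j\<close>.

  For (3), a rank-one representation consists of the projections onto unit vectors \<open>e_x\<close>; both
  \<open>(e_u)\<close> and \<open>(e_v)\<close> are orthonormal bases, the overlaps \<open>c(u,v) = \<langle>e_v, e_u\<rangle>\<close> form an
  admissible weighting by Parseval's identity, and expressing vectors in the basis \<open>(e_u)\<close>
  conjugates \<rho> into \<open>\<rho>_c\<close>.
*)

theory Submission
  imports Defs
begin

section \<open>The hypercube\<close>

lemma flip_bit_less_pow2: "x < 2 ^ n \<Longrightarrow> k < n \<Longrightarrow> flip_bit k (x::nat) < 2 ^ n"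
  by (metis take_bit_nat_eq_self_iff take_bit_flip_bit_eq not_le)

lemma flip_bit_flip_bit [simp]: "flip_bit k (flip_bit k (x::nat)) = x"
  by (rule bit_eqI) (auto simp: bit_flip_bit_iff)

lemma flip_bit_commute: "flip_bit k (flip_bit l (x::nat)) = flip_bit l (flip_bit k x)"
  by (rule bit_eqI) (auto simp: bit_flip_bit_iff)

lemma flip_bit_eq_flip_bit_iff: "flip_bit k (x::nat) = flip_bit l x \<longleftrightarrow> k = l"
proof
  assume "flip_bit k x = flip_bit l x"
  then have "bit (flip_bit k x) k = bit (flip_bit l x) k" by simp
  then show "k = l" by (auto simp: bit_flip_bit_iff split: if_splits)
qed simp

lemma flip_bit_flip_bit_neq: "k \<noteq> l \<Longrightarrow> flip_bit k (flip_bit l (x::nat)) \<noteq> x"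
  by (metis flip_bit_eq_flip_bit_iff flip_bit_flip_bit)

lemma bit_ge_length: "(x::nat) < 2 ^ n \<Longrightarrow> n \<le> k \<Longrightarrow> \<not> bit x k"
  by (metis bit_take_bit_iff not_le take_bit_nat_eq_self_iff)

lemma odd_ones_flip_bit_iff:
  assumes "k < n"
  shows "odd (ones n (flip_bit k x)) \<longleftrightarrow> even (ones n x)"
proof -
  let ?S = "{k'. k' < n \<and> bit x k'}"
  show ?thesis
  proof (cases "bit x k")
    case True
    then have "{k'. k' < n \<and> bit (flip_bit k x) k'} = ?S - {k}" and "k \<in> ?S"
      using assms by (auto simp: bit_flip_bit_iff)
    then have "ones n x = Suc (ones n (flip_bit k x))"
      unfolding ones_def by (metis card_Suc_Diff1 finite_Collect_conjI finite_Collect_less_nat)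
    then show ?thesis by simp
  next
    case False
    then have "{k'. k' < n \<and> bit (flip_bit k x) k'} = insert k ?S" and "k \<notin> ?S"
      using assms by (auto simp: bit_flip_bit_iff)
    then have "ones n (flip_bit k x) = Suc (ones n x)"
      unfolding ones_def by simp
    then show ?thesis by simp
  qed
qed

lemma Uv_imp_not_Vv: "x \<in> Uv n \<Longrightarrow> x \<notin> Vv n"
  by (auto simp: Uv_def Vv_def)

lemma flip_bit_Uv: "x \<in> Uv n \<Longrightarrow> k < n \<Longrightarrow> flip_bit k x \<in> Vv n"
  using odd_ones_flip_bit_iff[of k n x] flip_bit_less_pow2 by (auto simp: Uv_def Vv_def)

lemma flip_bit_Vv: "x \<in> Vv n \<Longrightarrow> k < n \<Longrightarrow> flip_bit k x \<in> Uv n"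
  using odd_ones_flip_bit_iff[of k n x] flip_bit_less_pow2 by (auto simp: Uv_def Vv_def)

lemma finite_Uv: "finite (Uv n)"
  by (simp add: Uv_def)

lemma finite_Vv: "finite (Vv n)"
  by (simp add: Vv_def)

lemma Ed_iff: "(i, j) \<in> Ed n \<longleftrightarrow> i \<in> Uv n \<and> (\<exists>k<n. j = flip_bit k i)"
  using flip_bit_Uv by (auto simp: Ed_def)

lemma Ed_imp_Uv_Vv: "(i, j) \<in> Ed n \<Longrightarrow> i \<in> Uv n \<and> j \<in> Vv n"
  by (auto simp: Ed_def)

lemma Ed_flip_bit: "(i, j) \<in> Ed n \<Longrightarrow> i < 2 ^ n \<and> (\<exists>k<n. j = flip_bit k i)"
  by (auto simp: Ed_def Uv_def)

lemma nbrs_iff: "y \<in> nbrs n x \<longleftrightarrow> x < 2 ^ n \<and> (\<exists>k<n. y = flip_bit k x)"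
proof
  assume "y \<in> nbrs n x"
  then show "x < 2 ^ n \<and> (\<exists>k<n. y = flip_bit k x)"
    unfolding nbrs_def Ed_iff using flip_bit_less_pow2 by (auto simp: Uv_def)
next
  assume "x < 2 ^ n \<and> (\<exists>k<n. y = flip_bit k x)"
  moreover have "x \<in> Uv n \<or> x \<in> Vv n" if "x < 2 ^ n"
    using that by (auto simp: Uv_def Vv_def)
  ultimately show "y \<in> nbrs n x"
    unfolding nbrs_def Ed_iff using flip_bit_Vv by force
qed

lemma Ed_iff_nbrs: "(i, j) \<in> Ed n \<longleftrightarrow> i \<in> Uv n \<and> j \<in> nbrs n i"
  by (auto simp: nbrs_def Ed_def dest: Uv_imp_not_Vv)

lemma finite_Ed: "finite (Ed n)"
proof (rule finite_subset)
  show "Ed n \<subseteq> {..<2 ^ n} \<times> {..<2 ^ n}"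
    by (auto simp: Ed_def Uv_def Vv_def)
qed simp

lemma finite_nbrs: "finite (nbrs n x)"
  by (rule finite_subset[of _ "{..<2 ^ n}"]) (auto simp: nbrs_iff flip_bit_less_pow2)

lemma nbrs_flip_bit_Int:
  assumes x: "x < 2 ^ n" and kl: "k < n" "l < n" "k \<noteq> l"
  shows "nbrs n (flip_bit k x) \<inter> nbrs n (flip_bit l x) = {x, flip_bit k (flip_bit l x)}"
proof (intro equalityI subsetI)
  fix y assume "y \<in> nbrs n (flip_bit k x) \<inter> nbrs n (flip_bit l x)"
  then obtain m m' where m: "y = flip_bit m (flip_bit k x)" "y = flip_bit m' (flip_bit l x)"
    unfolding Int_iff nbrs_iff by blast
  then have "bit (flip_bit m (flip_bit k x)) p = bit (flip_bit m' (flip_bit l x)) p" for p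
    by simp
  from this[of k] this[of l] this[of m] this[of m'] have "(m = k \<and> m' = l) \<or> (m = l \<and> m' = k)"
    using kl(3) by (simp add: bit_flip_bit_iff) blast
  then show "y \<in> {x, flip_bit k (flip_bit l x)}"
    using m flip_bit_commute[of l k x] by auto
next
  have "x \<in> nbrs n (flip_bit k x)" "x \<in> nbrs n (flip_bit l x)"
    using kl flip_bit_less_pow2[OF x] unfolding nbrs_iff by (metis flip_bit_flip_bit)+
  moreover have "flip_bit k (flip_bit l x) \<in> nbrs n (flip_bit k x) \<inter> nbrs n (flip_bit l x)"
    using kl flip_bit_less_pow2[OF x] flip_bit_commute[of k l x] unfolding Int_iff nbrs_iff by metis
  ultimately show "y \<in> nbrs n (flip_bit k x) \<inter> nbrs n (flip_bit l x)"
    if "y \<in> {x, flip_bit k (flip_bit l x)}" for y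
    using that by blast
qed

lemma flip_bit_subcube_verts:
  "x \<in> subcube_verts n K a \<Longrightarrow> k \<in> K \<Longrightarrow> k < n \<Longrightarrow> flip_bit k x \<in> subcube_verts n K a"
  by (auto simp: subcube_verts_def flip_bit_less_pow2 bit_flip_bit_iff)

lemma subcube_verts_self: "a < 2 ^ n \<Longrightarrow> a \<in> subcube_verts n K a"
  by (auto simp: subcube_verts_def)

lemma flip_bit_subcube_verts_imp_mem:
  assumes "x \<in> subcube_verts n K a" "flip_bit k x \<in> subcube_verts n K a" "k < n"
  shows "k \<in> K"
  using assms by (auto simp: subcube_verts_def bit_flip_bit_iff)

lemma subcube_verts_induct [consumes 3, case_names base flip]:
  assumes x: "x \<in> subcube_verts n K a" and a: "a < 2 ^ n" and K: "K \<subseteq> {..<n}"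
    and base: "P a"
    and flip: "\<And>y k. y \<in> subcube_verts n K a \<Longrightarrow> k \<in> K \<Longrightarrow> P y \<Longrightarrow> P (flip_bit k y)"
  shows "P x"
proof -
  define diff where "diff y = {k. k < n \<and> bit y k \<noteq> bit a k}" for y :: nat
  have "P y" if "y \<in> subcube_verts n K a" "card (diff y) = m" for y m
    using that
  proof (induction m arbitrary: y)
    case 0
    have "bit y p = bit a p" for p
      using 0 bit_ge_length[OF a, of p] bit_ge_length[of y n p]
      by (cases "p < n") (auto simp: diff_def subcube_verts_def)
    then have "y = a" by (rule bit_eqI)
    then show ?case using base by simp
  next
    case (Suc m)
    then obtain k where k: "k \<in> diff y" by fastforce
    then have "k \<in> K" "k < n"
      using Suc.prems(1) K by (auto simp: diff_def subcube_verts_def)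
    then have y': "flip_bit k y \<in> subcube_verts n K a"
      using Suc.prems(1) by (rule flip_bit_subcube_verts[rotated])
    have "diff (flip_bit k y) = diff y - {k}"
      using k by (auto simp: diff_def bit_flip_bit_iff)
    then have "card (diff (flip_bit k y)) = m"
      using Suc.prems(2) k by (simp add: diff_def)
    then have "P (flip_bit k y)" using Suc.IH y' by blast
    then show ?case using flip[OF y' \<open>k \<in> K\<close>] by simp
  qed
  then show ?thesis using x by blast
qed

section \<open>Matrices on \<open>\<complex>^I\<close>\<close>

lemma mm_idm_left:
  assumes "finite K" "S \<subseteq> K"
  shows "mm K (idm S) R = (\<lambda>a b. if a \<in> S then R a b else 0)"
proof (intro ext)
  fix a b
  have "mm K (idm S) R a b = (\<Sum>k\<in>K. if k = a then (if a \<in> S then R k b else 0) else 0)"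
    unfolding mm_def idm_def by (rule sum.cong) auto
  then show "mm K (idm S) R a b = (if a \<in> S then R a b else 0)"
    using assms by auto
qed

lemma mm_idm_right:
  assumes "finite K" "S \<subseteq> K"
  shows "mm K R (idm S) = (\<lambda>a b. if b \<in> S then R a b else 0)"
proof (intro ext)
  fix a b
  have "mm K R (idm S) a b = (\<Sum>k\<in>K. if k = b then (if b \<in> S then R a k else 0) else 0)"
    unfolding mm_def idm_def by (rule sum.cong) auto
  then show "mm K R (idm S) a b = (if b \<in> S then R a b else 0)"
    using assms by auto
qed

lemma is_proj_idm: "finite K \<Longrightarrow> S \<subseteq> K \<Longrightarrow> is_proj K (idm S)"
  unfolding is_proj_def
  by (auto simp: mm_idm_left mat_on_def adj_def fun_eq_iff) (auto simp: idm_def)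

lemma mm_idm_idm_disjoint:
  assumes "finite K" "S \<subseteq> K" "S \<inter> T = {}"
  shows "mm K (idm S) (idm T) = (\<lambda>_ _. 0)"
  unfolding mm_idm_left[OF assms(1,2)] using assms(3) by (auto simp: idm_def fun_eq_iff)

lemma sum_idm_disjoint:
  assumes "finite Xs" and disjoint: "\<forall>X\<in>Xs. \<forall>Y\<in>Xs. X \<noteq> Y \<longrightarrow> X \<inter> Y = {}"
    and "U \<subseteq> \<Union>Xs"
  shows "(\<lambda>a b. \<Sum>X\<in>Xs. idm (X \<inter> U) a b) = idm U"
proof (intro ext)
  fix a b
  show "(\<Sum>X\<in>Xs. idm (X \<inter> U) a b) = idm U a b"
  proof (cases "a = b \<and> a \<in> U")
    case True
    then obtain X0 where X0: "X0 \<in> Xs" "a \<in> X0"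
      using assms(3) by blast
    have "(\<Sum>X\<in>Xs. idm (X \<inter> U) a b) = (\<Sum>X\<in>Xs. if X = X0 then 1 else 0)"
      using True X0 disjoint by (intro sum.cong) (auto simp: idm_def)
    also have "\<dots> = 1"
      using X0 \<open>finite Xs\<close> by simp
    finally show ?thesis
      using True by (auto simp: idm_def)
  qed (auto simp: idm_def intro!: sum.neutral)
qed

lemma if_zero_mult: "(if P then u else 0) * (v::complex) = (if P then u * v else 0)"
  by simp

lemma mult_if_zero: "(v::complex) * (if P then u else 0) = (if P then v * u else 0)"
  by simp

lemma cnj_if_zero: "cnj (if P then u else 0) = (if P then cnj u else 0)"
  by simp

definition diag_mat :: "'a set \<Rightarrow> ('a \<Rightarrow> complex) \<Rightarrow> 'a \<Rightarrow> 'a \<Rightarrow> complex" where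
  "diag_mat I m = (\<lambda>a b. if a = b \<and> a \<in> I then m a else 0)"

lemma conj_diag_mat:
  assumes "finite I"
  shows "mm I (mm I (diag_mat I m) R) (adj (diag_mat I m)) =
    (\<lambda>a b. if a \<in> I \<and> b \<in> I then m a * R a b * cnj (m b) else 0)"
proof -
  have "mm I (diag_mat I m) R = (\<lambda>a b. if a \<in> I then m a * R a b else 0)"
    unfolding mm_def diag_mat_def using assms
    by (simp add: fun_eq_iff if_zero_mult sum.delta cong: if_cong)
  then show ?thesis
    unfolding mm_def diag_mat_def adj_def using assms
    by (auto simp: fun_eq_iff if_zero_mult mult_if_zero cnj_if_zero sum.delta' cong: if_cong)
qed

lemma norm_eq_iff_mult_cnj: "cmod z = cmod w \<longleftrightarrow> z * cnj z = w * cnj w"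
proof -
  have "cmod z = cmod w \<longleftrightarrow> complex_of_real ((cmod z)\<^sup>2) = complex_of_real ((cmod w)\<^sup>2)"
    by (simp only: of_real_eq_iff power2_eq_iff_nonneg norm_ge_zero)
  then show ?thesis
    by (simp only: complex_norm_square)
qed

lemma norm_eq_1_iff_mult_cnj: "cmod z = 1 \<longleftrightarrow> z * cnj z = 1"
  using norm_eq_iff_mult_cnj[of z 1] by simp

lemma diag_mat_unitary:
  assumes "finite I" and unit: "\<forall>a\<in>I. cmod (m a) = 1"
  shows "mm I (diag_mat I m) (adj (diag_mat I m)) = idm I"
    and "mm I (adj (diag_mat I m)) (diag_mat I m) = idm I"
proof -
  have "m a * cnj (m a) = 1" if "a \<in> I" for a
    using unit that norm_eq_1_iff_mult_cnj by blast
  moreover have "cnj (m a) * m a = 1" if "a \<in> I" for a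
    using unit that norm_eq_1_iff_mult_cnj by (simp add: mult.commute)
  ultimately show "mm I (diag_mat I m) (adj (diag_mat I m)) = idm I"
    and "mm I (adj (diag_mat I m)) (diag_mat I m) = idm I"
    unfolding mm_def diag_mat_def adj_def idm_def using assms(1)
    by (auto simp: fun_eq_iff if_zero_mult mult_if_zero cnj_if_zero sum.delta' cong: if_cong;
        auto intro!: sum.neutral)+
qed

definition ip :: "'a set \<Rightarrow> ('a \<Rightarrow> complex) \<Rightarrow> ('a \<Rightarrow> complex) \<Rightarrow> complex" where
  "ip I v w = (\<Sum>a\<in>I. v a * cnj (w a))"

lemma cnj_ip: "cnj (ip I v w) = ip I w v"
  by (simp add: ip_def mult.commute)

lemma ip_self: "ip I v v = complex_of_real (\<Sum>a\<in>I. (cmod (v a))\<^sup>2)"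
  by (simp only: ip_def of_real_sum complex_norm_square)

lemma ip_self_eq_1_imp_nonzero: "ip I v v = 1 \<Longrightarrow> \<exists>a\<in>I. v a \<noteq> 0"
  unfolding ip_def using sum.neutral[of I "\<lambda>a. v a * cnj (v a)"] by fastforce

lemma parseval:
  assumes "finite I"
    and resolution: "\<And>a b. (\<Sum>s\<in>S. f s a * cnj (f s b)) = idm I a b"
  shows "(\<Sum>s\<in>S. ip I (f s) x * cnj (ip I (f s) y)) = ip I y x"
proof -
  have "(\<Sum>s\<in>S. ip I (f s) x * cnj (ip I (f s) y))
      = (\<Sum>s\<in>S. \<Sum>a\<in>I. \<Sum>b\<in>I. (f s a * cnj (f s b)) * (cnj (x a) * y b))"
    unfolding ip_def by (simp add: sum_distrib_left sum_distrib_right algebra_simps)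
  also have "\<dots> = (\<Sum>a\<in>I. \<Sum>b\<in>I. (\<Sum>s\<in>S. f s a * cnj (f s b)) * (cnj (x a) * y b))"
    by (simp only: sum.swap[of _ S] sum_distrib_right)
  also have "\<dots> = (\<Sum>a\<in>I. cnj (x a) * y a)"
    using assms by (simp add: resolution idm_def if_zero_mult sum.delta cong: if_cong)
  finally show ?thesis
    by (simp add: ip_def mult.commute)
qed

lemma orthonormal_if_resolution:
  assumes "finite S" "finite I"
    and resolution: "\<And>a b. (\<Sum>s\<in>S. f s a * cnj (f s b)) = idm I a b"
    and unit: "\<And>s. s \<in> S \<Longrightarrow> ip I (f s) (f s) = 1"
    and "s \<in> S" "t \<in> S"
  shows "ip I (f s) (f t) = (if s = t then 1 else 0)"
proof (cases "s = t")
  case False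
  let ?g = "\<lambda>r. (cmod (ip I (f r) (f t)))\<^sup>2"
  have "complex_of_real (\<Sum>r\<in>S. ?g r) = (\<Sum>r\<in>S. ip I (f r) (f t) * cnj (ip I (f r) (f t)))"
    by (simp only: of_real_sum complex_norm_square)
  also have "\<dots> = 1"
    using parseval[OF assms(2) resolution, of "f t" "f t"] unit[OF \<open>t \<in> S\<close>] by simp
  finally have "complex_of_real (\<Sum>r\<in>S. ?g r) = 1" .
  then have "(\<Sum>r\<in>S. ?g r) = 1"
    by (simp only: of_real_eq_1_iff)
  then have "(\<Sum>r\<in>S. ?g r) = ?g t"
    using unit[OF \<open>t \<in> S\<close>] by simp
  then have "(\<Sum>r\<in>S - {t}. ?g r) = 0"
    using assms(1) \<open>t \<in> S\<close> by (simp add: sum.remove)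
  then have "?g s = 0"
    using assms(1) \<open>s \<in> S\<close> False by (simp add: sum_nonneg_eq_0_iff)
  then show ?thesis using False by simp
qed (use unit \<open>t \<in> S\<close> in simp)

lemma mm_outer:
  "mm I (\<lambda>a b. v a * cnj (v b)) (\<lambda>a b. w a * cnj (w b)) = (\<lambda>a b. v a * cnj (w b) * ip I w v)"
  by (simp add: fun_eq_iff mm_def ip_def sum_distrib_left algebra_simps)

lemma conj_outer:
  "mm I (mm I W (\<lambda>a b. v a * cnj (v b))) (adj W) =
     (\<lambda>a b. (\<Sum>k\<in>I. W a k * v k) * cnj (\<Sum>k\<in>I. W b k * v k))"
  by (simp add: fun_eq_iff mm_def adj_def sum_distrib_left sum_distrib_right algebra_simps)

lemma conj_idm_singleton:
  assumes "finite I" "u \<in> I"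
  shows "mm I (mm I W (idm {u})) (adj W) = (\<lambda>a b. W a u * cnj (W b u))"
proof -
  have "idm {u} = (\<lambda>a b. (if a = u then 1 else 0) * cnj (if b = u then 1 else 0))"
    by (simp add: fun_eq_iff idm_def)
  then show ?thesis
    using assms by (simp add: conj_outer mult_if_zero sum.delta' cong: if_cong)
qed

lemma outer_orthogonal:
  assumes "mm I (\<lambda>a b. v a * cnj (v b)) (\<lambda>a b. w a * cnj (w b)) = (\<lambda>_ _. 0)"
    and "ip I v v = 1" "ip I w w = 1"
  shows "ip I w v = 0"
proof -
  have zero: "v a * cnj (w b) * ip I w v = 0" for a b
    using fun_cong[OF fun_cong[OF assms(1), of a], of b] by (simp add: mm_outer)
  obtain a b where "v a \<noteq> 0" "w b \<noteq> 0"
    using ip_self_eq_1_imp_nonzero assms(2,3) by blast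
  then show ?thesis
    using zero[of a b] by simp
qed

lemma resolution_outer:
  assumes "finite X" and resolution: "(\<lambda>a b. \<Sum>x\<in>X. \<rho> x a b) = idm I"
    and outer: "\<And>x. x \<in> X \<Longrightarrow> \<rho> x \<noteq> (\<lambda>_ _. 0) \<Longrightarrow> \<rho> x = (\<lambda>a b. e x a * cnj (e x b))"
  shows "(\<Sum>s\<in>{x \<in> X. \<rho> x \<noteq> (\<lambda>_ _. 0)}. e s a * cnj (e s b)) = idm I a b"
proof -
  have "(\<Sum>s\<in>{x \<in> X. \<rho> x \<noteq> (\<lambda>_ _. 0)}. e s a * cnj (e s b)) =
      (\<Sum>s\<in>{x \<in> X. \<rho> x \<noteq> (\<lambda>_ _. 0)}. \<rho> s a b)"
  proof (rule sum.cong)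
    fix s assume "s \<in> {x \<in> X. \<rho> x \<noteq> (\<lambda>_ _. 0)}"
    then have "\<rho> s = (\<lambda>a b. e s a * cnj (e s b))"
      using outer by blast
    then show "e s a * cnj (e s b) = \<rho> s a b"
      by simp
  qed simp
  also have "\<dots> = (\<Sum>x\<in>X. \<rho> x a b)"
    using \<open>finite X\<close> by (intro sum.mono_neutral_left) auto
  finally show ?thesis
    using fun_cong[OF fun_cong[OF resolution, of a], of b] by simp
qed

lemma outer_eq_imp_phase:
  fixes v w :: "'a \<Rightarrow> complex"
  assumes outer: "\<And>a b. v a * cnj (v b) = w a * cnj (w b)"
  obtains z where "cmod z = 1" and "\<And>a. v a = z * w a"
proof (cases "\<forall>a. w a = 0")
  case True
  then have "v a = 0" for a
    using outer[of a a] by simp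
  then show ?thesis
    using True that[of 1] by simp
next
  case False
  then obtain b where wb: "w b \<noteq> 0" by blast
  have vb: "v b * cnj (v b) = w b * cnj (w b)"
    by (rule outer)
  then have "v b \<noteq> 0"
    using wb by auto
  have "cmod (v b) = cmod (w b)"
    using vb norm_eq_iff_mult_cnj by blast
  then have "cmod (v b / w b) = 1"
    using wb by (simp add: norm_divide)
  moreover have "v a = v b / w b * w a" for a
  proof -
    have "v a * cnj (v b) * v b = w a * cnj (w b) * v b"
      using outer[of a b] by simp
    then have "v a * (v b * cnj (v b)) = w a * cnj (w b) * v b"
      by (simp add: ac_simps)
    then have "cnj (w b) * (v a * w b - w a * v b) = 0"
      unfolding vb by (simp add: algebra_simps)
    then have "v a * w b = w a * v b"
      using wb by simp
    then show ?thesis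
      using wb by (simp add: field_simps)
  qed
  ultimately show ?thesis
    by (rule that)
qed

section \<open>The representation \<open>\<rho>_c\<close>\<close>

lemma Ec_imp_Ed: "(i, j) \<in> Ec n c \<Longrightarrow> (i, j) \<in> Ed n"
  by (simp add: Ec_def)

lemma Uc_iff: "i \<in> Uc n c \<longleftrightarrow> (\<exists>j. (i, j) \<in> Ec n c)"
  by (force simp: Uc_def)

lemma Vc_iff: "j \<in> Vc n c \<longleftrightarrow> (\<exists>i. (i, j) \<in> Ec n c)"
  by (force simp: Vc_def)

lemma Ec_imp_Uc: "(i, j) \<in> Ec n c \<Longrightarrow> i \<in> Uc n c"
  by (auto simp: Uc_iff)

lemma Ec_imp_Vc: "(i, j) \<in> Ec n c \<Longrightarrow> j \<in> Vc n c"
  by (auto simp: Vc_iff)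

lemma Uc_imp_Uv: "x \<in> Uc n c \<Longrightarrow> x \<in> Uv n"
  by (auto simp: Uc_def Ec_def Ed_def)

lemma Vc_imp_Vv: "x \<in> Vc n c \<Longrightarrow> x \<in> Vv n"
  by (auto simp: Vc_def Ec_def Ed_def)

lemma Uc_imp_verts: "x \<in> Uc n c \<Longrightarrow> x \<in> verts n"
  using Uc_imp_Uv by (auto simp: verts_def)

lemma Vc_imp_verts: "x \<in> Vc n c \<Longrightarrow> x \<in> verts n"
  using Vc_imp_Vv by (auto simp: verts_def)

lemma finite_Ec: "finite (Ec n c)"
  by (rule finite_subset[OF _ finite_Ed[of n]]) (auto simp: Ec_def)

lemma finite_Uc: "finite (Uc n c)"
  unfolding Uc_def using finite_Ec by simp

lemma finite_Vc: "finite (Vc n c)"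
  unfolding Vc_def using finite_Ec by simp

lemma ce_nonzero_iff: "ce n c i j \<noteq> 0 \<longleftrightarrow> (i, j) \<in> Ec n c"
  by (auto simp: ce_def Ec_def)

lemma ce_eq_0_if_not_Uc: "i \<notin> Uc n c \<Longrightarrow> ce n c i j = 0"
  using ce_nonzero_iff Ec_imp_Uc by blast

lemma ce_eq_0_if_not_Vc: "j \<notin> Vc n c \<Longrightarrow> ce n c i j = 0"
  using ce_nonzero_iff Ec_imp_Vc by blast

lemma rho_c_Uc: "x \<in> Uc n c \<Longrightarrow> rho_c n c x = idm {x}"
  by (auto simp: rho_c_def idm_def fun_eq_iff)

lemma rho_c_Vv: "j \<in> Vv n \<Longrightarrow> rho_c n c j = (\<lambda>a b. ce n c a j * cnj (ce n c b j))"
  using Uc_imp_Uv Uv_imp_not_Vv ce_eq_0_if_not_Vc by (fastforce simp: rho_c_def)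

lemma rho_c_eq_0: "x \<notin> Uc n c \<Longrightarrow> x \<notin> Vc n c \<Longrightarrow> rho_c n c x = (\<lambda>_ _. 0)"
  by (simp add: rho_c_def)

lemma rho_c_nonzero_cases:
  assumes "rho_c n c x a b \<noteq> 0"
  shows "(x \<in> Uc n c \<and> a = x \<and> b = x) \<or> ((a, x) \<in> Ec n c \<and> (b, x) \<in> Ec n c)"
proof (cases "x \<in> Uc n c")
  case True
  then show ?thesis
    using assms by (auto simp: rho_c_Uc idm_def split: if_splits)
next
  case False
  show ?thesis
  proof (cases "x \<in> Vc n c")
    case True
    then show ?thesis
      using assms by (simp add: rho_c_Vv[OF Vc_imp_Vv] ce_nonzero_iff)
  qed (use assms False in \<open>simp add: rho_c_eq_0\<close>)
qed

text \<open>The \<open>edge_closed\<close> sets are the unions of connected components of \<open>Q_n(c)\<close>.\<close>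

definition edge_closed :: "nat \<Rightarrow> (nat \<Rightarrow> nat \<Rightarrow> complex) \<Rightarrow> nat set \<Rightarrow> bool" where
  "edge_closed n c X \<longleftrightarrow> (\<forall>i j. (i, j) \<in> Ec n c \<longrightarrow> (i \<in> X \<longleftrightarrow> j \<in> X))"

definition edge_connected :: "nat \<Rightarrow> (nat \<Rightarrow> nat \<Rightarrow> complex) \<Rightarrow> nat set \<Rightarrow> bool" where
  "edge_connected n c X \<longleftrightarrow>
     (\<forall>S. (\<forall>i j. (i, j) \<in> Ec n c \<longrightarrow> i \<in> X \<longrightarrow> j \<in> X \<longrightarrow> (i \<in> S \<longleftrightarrow> j \<in> S))
          \<longrightarrow> X \<subseteq> S \<or> X \<inter> S = {})"

lemma edge_closed_commutes_rho_c:
  assumes "edge_closed n c X"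
  shows "mm (Uc n c) (idm (X \<inter> Uc n c)) (rho_c n c x) =
         mm (Uc n c) (rho_c n c x) (idm (X \<inter> Uc n c))"
proof -
  have "a \<in> X \<inter> Uc n c \<longleftrightarrow> b \<in> X \<inter> Uc n c" if "rho_c n c x a b \<noteq> 0" for a b
    using rho_c_nonzero_cases[OF that] assms Ec_imp_Uc unfolding edge_closed_def by blast
  then show ?thesis
    using finite_Uc by (auto simp: mm_idm_left mm_idm_right fun_eq_iff)
qed

lemma edge_closed_rho_c_outside:
  assumes "edge_closed n c X" "x \<notin> X"
  shows "mm (Uc n c) (rho_c n c x) (idm (X \<inter> Uc n c)) = (\<lambda>_ _. 0)"
proof -
  have "b \<notin> X" if "rho_c n c x a b \<noteq> 0" for a b
    using rho_c_nonzero_cases[OF that] assms unfolding edge_closed_def by blast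
  then show ?thesis
    using finite_Uc by (auto simp: mm_idm_right fun_eq_iff)
qed

lemma edge_closed_meets_Uc:
  assumes "edge_closed n c X" "x \<in> X" "x \<in> Uc n c \<union> Vc n c"
  shows "X \<inter> Uc n c \<noteq> {}"
proof (cases "x \<in> Uc n c")
  case False
  then obtain i where "(i, x) \<in> Ec n c"
    using assms(3) by (auto simp: Vc_iff)
  then show ?thesis
    using assms(1,2) Ec_imp_Uc unfolding edge_closed_def by blast
qed (use assms(2) in blast)

lemma proj_commuting_idm_singletons:
  assumes "finite I" and proj: "is_proj I Q"
    and comm: "\<And>u. u \<in> I \<Longrightarrow> mm I Q (idm {u}) = mm I (idm {u}) Q"
  shows "Q = idm {u \<in> I. Q u u = 1}"
proof -
  have support: "mat_on I I Q" and idem: "mm I Q Q = Q"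
    using proj by (auto simp: is_proj_def)
  have off_diag: "Q a b = 0" if "a \<noteq> b" for a b
  proof (cases "a \<in> I")
    case True
    then have "mm I Q (idm {a}) a b = mm I (idm {a}) Q a b"
      using comm by simp
    then show ?thesis
      using True that \<open>finite I\<close> by (simp add: mm_idm_left mm_idm_right)
  qed (use support in \<open>simp add: mat_on_def\<close>)
  have "Q a a = 0 \<or> Q a a = 1" for a
  proof (cases "a \<in> I")
    case True
    have "Q a a = mm I Q Q a a"
      using idem by simp
    also have "\<dots> = (\<Sum>k\<in>I. if k = a then Q a a * Q a a else 0)"
      unfolding mm_def by (rule sum.cong) (auto simp: off_diag)
    also have "\<dots> = Q a a * Q a a"
      using True \<open>finite I\<close> by simp
    finally have "Q a a * (Q a a - 1) = 0"
      by (simp add: algebra_simps)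
    then show ?thesis by simp
  qed (use support in \<open>simp add: mat_on_def\<close>)
  then show ?thesis
    using off_diag support by (auto simp: fun_eq_iff idm_def mat_on_def) metis
qed

lemma idm_commuting_rho_c_Vc:
  assumes comm: "mm (Uc n c) (idm S) (rho_c n c j) = mm (Uc n c) (rho_c n c j) (idm S)"
    and "S \<subseteq> Uc n c" and a: "(a, j) \<in> Ec n c" "a \<in> S" and b: "(b, j) \<in> Ec n c"
  shows "b \<in> S"
proof -
  have j: "j \<in> Vv n"
    using a Ec_imp_Vc Vc_imp_Vv by blast
  have "rho_c n c j b a \<noteq> 0"
    using a b j by (simp add: rho_c_Vv ce_nonzero_iff)
  moreover have "mm (Uc n c) (idm S) (rho_c n c j) b a = mm (Uc n c) (rho_c n c j) (idm S) b a"
    using comm by simp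
  ultimately show ?thesis
    using a finite_Uc \<open>S \<subseteq> Uc n c\<close> by (simp add: mm_idm_left mm_idm_right split: if_splits)
qed

lemma irreducible_on_edge_closed_connected:
  assumes closed: "edge_closed n c X" and connected: "edge_connected n c X"
    and nonempty: "X \<inter> Uc n c \<noteq> {}"
  shows "irreducible_on n (Uc n c) (idm (X \<inter> Uc n c)) (rho_c n c)"
  unfolding irreducible_on_def
proof (intro conjI allI impI)
  let ?U = "Uc n c"
  show "idm (X \<inter> ?U) \<noteq> (\<lambda>_ _. 0)"
    using nonempty by (auto simp: idm_def fun_eq_iff)
  fix Q
  assume Q: "is_proj ?U Q \<and> mm ?U Q (idm (X \<inter> ?U)) = Q \<and>
    (\<forall>x\<in>verts n. mm ?U Q (rho_c n c x) = mm ?U (rho_c n c x) Q)"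
  define S where "S = {u \<in> ?U. Q u u = 1}"
  have "mm ?U Q (idm {u}) = mm ?U (idm {u}) Q" if "u \<in> ?U" for u
    using Q Uc_imp_verts[OF that] rho_c_Uc[OF that] by metis
  then have QS: "Q = idm S"
    unfolding S_def using Q finite_Uc by (intro proj_commuting_idm_singletons) auto
  have SU: "S \<subseteq> ?U"
    by (auto simp: S_def)
  have SX: "S \<subseteq> X"
  proof
    fix u assume "u \<in> S"
    then have "mm ?U Q (idm (X \<inter> ?U)) u u \<noteq> 0"
      using Q by (simp add: S_def)
    then show "u \<in> X"
      using finite_Uc by (simp add: mm_idm_right split: if_splits)
  qed
  define S' where "S' = S \<union> {j. \<exists>i\<in>S. (i, j) \<in> Ec n c}"
  have "i \<in> S' \<longleftrightarrow> j \<in> S'" if e: "(i, j) \<in> Ec n c" for i j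
  proof -
    have "i \<notin> Vv n" "j \<notin> S"
      using e SU Ec_imp_Ed Ed_imp_Uv_Vv Uc_imp_Uv Uv_imp_not_Vv by blast+
    moreover have "i \<in> S" if "(i', j) \<in> Ec n c" "i' \<in> S" for i'
      using idm_commuting_rho_c_Vc[OF _ SU that e] Q QS Ec_imp_Vc[OF e] Vc_imp_verts by metis
    ultimately show ?thesis
      using e Ec_imp_Ed Ed_imp_Uv_Vv unfolding S'_def by blast
  qed
  then have "X \<subseteq> S' \<or> X \<inter> S' = {}"
    using connected unfolding edge_connected_def by blast
  then show "Q = (\<lambda>_ _. 0) \<or> Q = idm (X \<inter> ?U)"
  proof
    assume "X \<subseteq> S'"
    then have "S = X \<inter> ?U"
      using SU SX Uc_imp_Uv Uv_imp_not_Vv Ec_imp_Ed Ed_imp_Uv_Vv unfolding S'_def by blast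
    then show ?thesis using QS by simp
  next
    assume "X \<inter> S' = {}"
    then have "S = {}"
      using SX unfolding S'_def by blast
    then show ?thesis using QS by (simp add: idm_def fun_eq_iff)
  qed
qed

lemma subcube_edge_connected:
  assumes K: "K \<subseteq> {..<n}" and a: "a < 2 ^ n"
    and edges: "induced_edges n (subcube_verts n K a) \<subseteq> Ec n c"
  shows "edge_connected n c (subcube_verts n K a)"
  unfolding edge_connected_def
proof (intro allI impI)
  let ?X = "subcube_verts n K a"
  fix S
  assume S: "\<forall>i j. (i, j) \<in> Ec n c \<longrightarrow> i \<in> ?X \<longrightarrow> j \<in> ?X \<longrightarrow> (i \<in> S \<longleftrightarrow> j \<in> S)"
  have "x \<in> S \<longleftrightarrow> a \<in> S" if "x \<in> ?X" for x
    using that a K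
  proof (induction rule: subcube_verts_induct)
    case (flip y k)
    have y': "flip_bit k y \<in> ?X"
      using flip.hyps K flip_bit_subcube_verts by blast
    have "y < 2 ^ n" "k < n"
      using flip.hyps K by (auto simp: subcube_verts_def)
    then have "flip_bit k y \<in> nbrs n y"
      by (auto simp: nbrs_iff)
    then have "(y, flip_bit k y) \<in> Ec n c \<or> (flip_bit k y, y) \<in> Ec n c"
      using edges flip.hyps(1) y' unfolding nbrs_def induced_edges_def by blast
    then show ?case
      using S flip.hyps(1) y' flip.IH by blast
  qed simp
  then show "?X \<subseteq> S \<or> ?X \<inter> S = {}"
    by blast
qed

section \<open>Decomposition along sub-hypercubes\<close>

lemma edge_closed_disjoint_block:
  assumes disjoint: "\<forall>X\<in>Xs. \<forall>Y\<in>Xs. X \<noteq> Y \<longrightarrow> X \<inter> Y = {}"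
    and edges: "Ec n c = (\<Union>X\<in>Xs. induced_edges n X)" and "X \<in> Xs"
  shows "edge_closed n c X"
  unfolding edge_closed_def
proof (intro allI impI)
  fix i j assume "(i, j) \<in> Ec n c"
  then have "(i, j) \<in> (\<Union>X\<in>Xs. induced_edges n X)"
    unfolding edges .
  then obtain Y where Y: "Y \<in> Xs" "i \<in> Y" "j \<in> Y"
    by (auto simp: induced_edges_def)
  then show "i \<in> X \<longleftrightarrow> j \<in> X"
    using disjoint[rule_format, OF \<open>X \<in> Xs\<close> Y(1)] by (cases "X = Y") auto
qed

lemma rho_c_direct_sum_irred:
  assumes subcubes: "\<forall>X\<in>Xs. is_subcube n X"
    and disjoint: "\<forall>X\<in>Xs. \<forall>Y\<in>Xs. X \<noteq> Y \<longrightarrow> X \<inter> Y = {}"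
    and verts: "Uc n c \<union> Vc n c = \<Union>Xs"
    and edges: "Ec n c = (\<Union>X\<in>Xs. induced_edges n X)"
  shows "direct_sum_irred n (Uc n c) (rho_c n c) Xs"
proof -
  let ?U = "Uc n c"
  have "finite (\<Union>Xs)"
    unfolding verts[symmetric] using finite_Uc finite_Vc by simp
  then have "finite Xs"
    by (rule finite_UnionD)
  have closed: "edge_closed n c X" if "X \<in> Xs" for X
    using disjoint edges that by (rule edge_closed_disjoint_block)
  have connected: "edge_connected n c X" and nonempty: "X \<inter> ?U \<noteq> {}" if "X \<in> Xs" for X
  proof -
    have "is_subcube n X"
      using subcubes that by blast
    then obtain K a where Ka: "K \<subseteq> {..<n}" "a < 2 ^ n" "X = subcube_verts n K a"
      unfolding is_subcube_def by blast
    have "induced_edges n X \<subseteq> Ec n c"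
      unfolding edges using that by blast
    then show "edge_connected n c X"
      using subcube_edge_connected[OF Ka(1,2)] Ka(3) by simp
    have "a \<in> X"
      using subcube_verts_self[OF Ka(2)] Ka(3) by simp
    moreover have "a \<in> ?U \<union> Vc n c"
      unfolding verts using that \<open>a \<in> X\<close> by blast
    ultimately show "X \<inter> ?U \<noteq> {}"
      by (rule edge_closed_meets_Uc[OF closed[OF that]])
  qed
  show ?thesis
    unfolding direct_sum_irred_def
  proof (intro exI[of _ "\<lambda>X. idm (X \<inter> ?U)"] conjI ballI impI)
    show "is_proj ?U (idm (X \<inter> ?U))" for X
      using finite_Uc by (simp add: is_proj_idm)
    show "mm ?U (idm (X \<inter> ?U)) (idm (Y \<inter> ?U)) = (\<lambda>_ _. 0)" if "X \<in> Xs" "Y \<in> Xs" "X \<noteq> Y" for X Y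
      using disjoint that finite_Uc[of n c] by (intro mm_idm_idm_disjoint) (simp_all, blast)
    show "(\<lambda>a b. \<Sum>X\<in>Xs. idm (X \<inter> ?U) a b) = idm ?U"
      using \<open>finite Xs\<close> disjoint by (rule sum_idm_disjoint) (use verts in blast)
    show "mm ?U (idm (X \<inter> ?U)) (rho_c n c x) = mm ?U (rho_c n c x) (idm (X \<inter> ?U))"
      if "X \<in> Xs" for X x
      using closed[OF that] by (rule edge_closed_commutes_rho_c)
    show "irreducible_on n ?U (idm (X \<inter> ?U)) (rho_c n c)" if "X \<in> Xs" for X
      using irreducible_on_edge_closed_connected[OF closed connected nonempty, OF that that that] .
    show "mm ?U (rho_c n c x) (idm (X \<inter> ?U)) = (\<lambda>_ _. 0)" if "X \<in> Xs" "x \<notin> X" for X x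
      using edge_closed_rho_c_outside[OF closed] that .
  qed
qed

section \<open>Irreducibility\<close>

lemma two_term_sum_eq_0:
  fixes a b c d :: complex
  assumes "a * cnj b + c * cnj d = 0" "a \<noteq> 0" "b \<noteq> 0"
  shows "c \<noteq> 0" and "d \<noteq> 0"
  using assms by auto

text \<open>The columns (or rows) \<open>x#k\<close> and \<open>x#l\<close> have exactly the common neighbours \<open>x\<close> and
  \<open>x#k#l\<close>, so their orthogonality puts the fourth edge of a square into \<open>Q_n(c)\<close> as soon as
  two adjacent ones are there.\<close>

lemma admissible_square_Uv:
  assumes adm: "admissible n c" and x: "x \<in> Uv n" and kl: "k < n" "l < n" "k \<noteq> l"
    and ek: "(x, flip_bit k x) \<in> Ec n c" and el: "(x, flip_bit l x) \<in> Ec n c"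
  shows "(flip_bit k (flip_bit l x), flip_bit l x) \<in> Ec n c"
proof -
  let ?y = "flip_bit k (flip_bit l x)"
  have common: "nbrs n (flip_bit k x) \<inter> nbrs n (flip_bit l x) = {x, ?y}"
    using x kl by (intro nbrs_flip_bit_Int) (auto simp: Uv_def)
  have "x \<noteq> ?y"
    using flip_bit_flip_bit_neq[OF kl(3), of x] by auto
  moreover have "flip_bit k x \<noteq> flip_bit l x"
    using kl(3) by (simp add: flip_bit_eq_flip_bit_iff)
  moreover have "flip_bit k x \<in> Vc n c" "flip_bit l x \<in> Vc n c"
    using ek el by (auto intro: Ec_imp_Vc)
  ultimately have "(\<Sum>i\<in>{x, ?y}. c i (flip_bit k x) * cnj (c i (flip_bit l x))) = 0"
    using adm unfolding admissible_def common[symmetric] by simp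
  then have "c x (flip_bit k x) * cnj (c x (flip_bit l x))
      + c ?y (flip_bit k x) * cnj (c ?y (flip_bit l x)) = 0"
    using \<open>x \<noteq> ?y\<close> by simp
  moreover have "c x (flip_bit k x) \<noteq> 0" "c x (flip_bit l x) \<noteq> 0"
    using ek el by (simp_all add: Ec_def)
  ultimately have "c ?y (flip_bit l x) \<noteq> 0"
    by (rule two_term_sum_eq_0(2))
  moreover have "(?y, flip_bit l x) \<in> Ed n"
    unfolding Ed_iff using flip_bit_Vv[OF flip_bit_Uv[OF x kl(2)] kl(1)] kl(1)
    by (intro conjI exI[of _ k]) simp_all
  ultimately show ?thesis
    by (simp add: Ec_def)
qed

lemma admissible_square_Vv:
  assumes adm: "admissible n c" and x: "x \<in> Vv n" and kl: "k < n" "l < n" "k \<noteq> l"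
    and ek: "(flip_bit k x, x) \<in> Ec n c" and el: "(flip_bit l x, x) \<in> Ec n c"
  shows "(flip_bit l x, flip_bit k (flip_bit l x)) \<in> Ec n c"
proof -
  let ?y = "flip_bit k (flip_bit l x)"
  have common: "nbrs n (flip_bit k x) \<inter> nbrs n (flip_bit l x) = {x, ?y}"
    using x kl by (intro nbrs_flip_bit_Int) (auto simp: Vv_def)
  have "x \<noteq> ?y"
    using flip_bit_flip_bit_neq[OF kl(3), of x] by auto
  moreover have "flip_bit k x \<noteq> flip_bit l x"
    using kl(3) by (simp add: flip_bit_eq_flip_bit_iff)
  moreover have "flip_bit k x \<in> Uc n c" "flip_bit l x \<in> Uc n c"
    using ek el by (auto intro: Ec_imp_Uc)
  ultimately have "(\<Sum>j\<in>{x, ?y}. c (flip_bit k x) j * cnj (c (flip_bit l x) j)) = 0"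
    using adm unfolding admissible_def common[symmetric] by simp
  then have "c (flip_bit k x) x * cnj (c (flip_bit l x) x)
      + c (flip_bit k x) ?y * cnj (c (flip_bit l x) ?y) = 0"
    using \<open>x \<noteq> ?y\<close> by simp
  moreover have "c (flip_bit k x) x \<noteq> 0" "c (flip_bit l x) x \<noteq> 0"
    using ek el by (simp_all add: Ec_def)
  ultimately have "c (flip_bit l x) ?y \<noteq> 0"
    by (rule two_term_sum_eq_0(2))
  moreover have "(flip_bit l x, ?y) \<in> Ed n"
    unfolding Ed_iff using flip_bit_Vv[OF x kl(2)] kl(1)
    by (intro conjI exI[of _ k]) simp_all
  ultimately show ?thesis
    by (simp add: Ec_def)
qed

definition c_adjacent :: "nat \<Rightarrow> (nat \<Rightarrow> nat \<Rightarrow> complex) \<Rightarrow> nat \<Rightarrow> nat \<Rightarrow> bool" where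
  "c_adjacent n c x y \<longleftrightarrow> (x, y) \<in> Ec n c \<or> (y, x) \<in> Ec n c"

lemma c_adjacent_sym: "c_adjacent n c x y \<Longrightarrow> c_adjacent n c y x"
  by (auto simp: c_adjacent_def)

lemma c_adjacent_imp_vertex: "c_adjacent n c x y \<Longrightarrow> x \<in> Uc n c \<union> Vc n c"
  by (auto simp: c_adjacent_def intro: Ec_imp_Uc Ec_imp_Vc)

lemma c_adjacent_Uv_iff: "x \<in> Uv n \<Longrightarrow> c_adjacent n c x y \<longleftrightarrow> (x, y) \<in> Ec n c"
  by (auto simp: c_adjacent_def Ec_def Ed_def Uv_def Vv_def)

lemma c_adjacent_Vv_iff: "x \<in> Vv n \<Longrightarrow> c_adjacent n c x y \<longleftrightarrow> (y, x) \<in> Ec n c"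
  by (auto simp: c_adjacent_def Ec_def Ed_def Uv_def Vv_def)

lemma admissible_square:
  assumes adm: "admissible n c" and x: "x < 2 ^ n" and kl: "k < n" "l < n" "k \<noteq> l"
    and "c_adjacent n c x (flip_bit k x)" "c_adjacent n c x (flip_bit l x)"
  shows "c_adjacent n c (flip_bit l x) (flip_bit k (flip_bit l x))"
proof -
  have "x \<in> Uv n \<or> x \<in> Vv n"
    using x by (auto simp: Uv_def Vv_def)
  then show ?thesis
  proof
    assume "x \<in> Uv n"
    then show ?thesis
      using assms admissible_square_Uv[OF adm _ kl] flip_bit_Uv[OF _ kl(2)]
      by (simp add: c_adjacent_Uv_iff c_adjacent_Vv_iff)
  next
    assume "x \<in> Vv n"
    then show ?thesis
      using assms admissible_square_Vv[OF adm _ kl] flip_bit_Vv[OF _ kl(2)]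
      by (simp add: c_adjacent_Uv_iff c_adjacent_Vv_iff)
  qed
qed

definition edge_dirs :: "nat \<Rightarrow> (nat \<Rightarrow> nat \<Rightarrow> complex) \<Rightarrow> nat \<Rightarrow> nat set" where
  "edge_dirs n c x = {k. k < n \<and> c_adjacent n c x (flip_bit k x)}"

lemma edge_dirs_less: "edge_dirs n c x \<subseteq> {..<n}"
  by (auto simp: edge_dirs_def)

lemma edge_dirs_subset_flip_bit:
  assumes adm: "admissible n c" and x: "x < 2 ^ n" and l: "l \<in> edge_dirs n c x"
  shows "edge_dirs n c x \<subseteq> edge_dirs n c (flip_bit l x)"
proof
  fix k assume k: "k \<in> edge_dirs n c x"
  show "k \<in> edge_dirs n c (flip_bit l x)"
  proof (cases "k = l")
    case True
    then show ?thesis using l by (auto simp: edge_dirs_def intro: c_adjacent_sym)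
  next
    case False
    then show ?thesis
      using admissible_square[OF adm x _ _ False] k l by (simp add: edge_dirs_def)
  qed
qed

lemma edge_dirs_flip_bit:
  assumes adm: "admissible n c" and x: "x < 2 ^ n" and l: "l \<in> edge_dirs n c x"
  shows "edge_dirs n c (flip_bit l x) = edge_dirs n c x"
proof
  have "l < n" "l \<in> edge_dirs n c (flip_bit l x)"
    using l by (auto simp: edge_dirs_def intro: c_adjacent_sym)
  then show "edge_dirs n c (flip_bit l x) \<subseteq> edge_dirs n c x"
    using edge_dirs_subset_flip_bit[OF adm flip_bit_less_pow2[OF x]] by fastforce
qed (rule edge_dirs_subset_flip_bit[OF assms])

lemma edge_dirs_subcube:
  assumes adm: "admissible n c" and a: "a < 2 ^ n"
    and x: "x \<in> subcube_verts n (edge_dirs n c a) a"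
  shows "edge_dirs n c x = edge_dirs n c a"
  using x a edge_dirs_less
proof (induction rule: subcube_verts_induct)
  case (flip y k)
  then show ?case
    using edge_dirs_flip_bit[OF adm] by (simp add: subcube_verts_def)
qed (auto simp: edge_dirs_def)

text \<open>For admissible \<open>c\<close>, the component of \<open>Q_n(c)\<close> through a vertex \<open>a\<close> is the sub-hypercube
  spanned at \<open>a\<close> by the directions of the edges at \<open>a\<close>.\<close>

lemma admissible_component_subcube:
  assumes adm: "admissible n c" and a: "a < 2 ^ n"
  defines "X \<equiv> subcube_verts n (edge_dirs n c a) a"
  shows "edge_closed n c X" and "induced_edges n X \<subseteq> Ec n c"
    and "edge_dirs n c a \<noteq> {} \<Longrightarrow> X \<subseteq> Uc n c \<union> Vc n c"
proof -
  have dirs: "edge_dirs n c x = edge_dirs n c a" if "x \<in> X" for x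
    using edge_dirs_subcube[OF adm a] that unfolding X_def .
  have flip_in_X: "flip_bit k x \<in> X" if "x \<in> X" "k \<in> edge_dirs n c x" for x k
    using that dirs[OF that(1)] edge_dirs_less flip_bit_subcube_verts
    unfolding X_def by blast
  show "edge_closed n c X"
    unfolding edge_closed_def
  proof (intro allI impI)
    fix i j assume e: "(i, j) \<in> Ec n c"
    then obtain k where k: "k < n" "j = flip_bit k i"
      using Ec_imp_Ed Ed_flip_bit by blast
    have "c_adjacent n c i (flip_bit k i)" "c_adjacent n c j (flip_bit k j)"
      using e k by (auto simp: c_adjacent_def)
    then have "k \<in> edge_dirs n c i" "k \<in> edge_dirs n c j"
      using k(1) by (auto simp: edge_dirs_def)
    then show "i \<in> X \<longleftrightarrow> j \<in> X"
      using flip_in_X k(2) by force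
  qed
  show "induced_edges n X \<subseteq> Ec n c"
  proof (safe)
    fix i j assume "(i, j) \<in> induced_edges n X"
    then have ij: "(i, j) \<in> Ed n" "i \<in> X" "j \<in> X"
      by (auto simp: induced_edges_def)
    then obtain k where k: "k < n" "j = flip_bit k i"
      using Ed_flip_bit by blast
    then have "k \<in> edge_dirs n c i"
      using flip_bit_subcube_verts_imp_mem[of i n _ a k] ij dirs unfolding X_def by simp
    then have "c_adjacent n c i j"
      using k by (simp add: edge_dirs_def)
    then show "(i, j) \<in> Ec n c"
      using ij(1) Ed_imp_Uv_Vv c_adjacent_Uv_iff by blast
  qed
  assume "edge_dirs n c a \<noteq> {}"
  then obtain k0 where k0: "k0 \<in> edge_dirs n c a" by blast
  have "c_adjacent n c x (flip_bit k0 x)" if "x \<in> X" for x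
  proof -
    have "k0 \<in> edge_dirs n c x"
      using dirs[OF that] k0 by simp
    then show ?thesis
      by (simp add: edge_dirs_def)
  qed
  then show "X \<subseteq> Uc n c \<union> Vc n c"
    using c_adjacent_imp_vertex by blast
qed

lemma irreducible_rho_c_edge_closed:
  assumes irr: "irreducible n (Uc n c) (rho_c n c)"
    and closed: "edge_closed n c X" and meets: "X \<inter> Uc n c \<noteq> {}"
  shows "Uc n c \<union> Vc n c \<subseteq> X"
proof -
  let ?U = "Uc n c"
  have reducing: "Q = (\<lambda>_ _. 0) \<or> Q = idm ?U"
    if "is_proj ?U Q" "mm ?U Q (idm ?U) = Q"
      "\<forall>x\<in>verts n. mm ?U Q (rho_c n c x) = mm ?U (rho_c n c x) Q" for Q
    using irr that unfolding irreducible_def irreducible_on_def by blast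
  have "mm ?U (idm (X \<inter> ?U)) (idm ?U) = idm (X \<inter> ?U)"
    unfolding mm_idm_right[OF finite_Uc order_refl] by (auto simp: idm_def fun_eq_iff)
  then have "idm (X \<inter> ?U) = (\<lambda>_ _. 0) \<or> idm (X \<inter> ?U) = idm ?U"
    using finite_Uc edge_closed_commutes_rho_c[OF closed]
    by (intro reducing) (auto simp: is_proj_idm)
  moreover have "idm (X \<inter> ?U) \<noteq> (\<lambda>_ _. 0)"
    using meets by (auto simp: idm_def fun_eq_iff)
  ultimately have reduces: "idm (X \<inter> ?U) = idm ?U"
    by blast
  have "?U \<subseteq> X"
  proof
    fix u assume "u \<in> ?U"
    moreover have "idm (X \<inter> ?U) u u = idm ?U u u"
      using reduces by simp
    ultimately show "u \<in> X"
      by (simp add: idm_def split: if_splits)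
  qed
  moreover have "Vc n c \<subseteq> X"
  proof
    fix j assume "j \<in> Vc n c"
    then obtain i where "(i, j) \<in> Ec n c"
      by (auto simp: Vc_iff)
    then show "j \<in> X"
      using \<open>?U \<subseteq> X\<close> closed Ec_imp_Uc unfolding edge_closed_def by blast
  qed
  ultimately show ?thesis
    by blast
qed

lemma irreducible_rho_c_imp_subcube:
  assumes adm: "admissible n c" and irr: "irreducible n (Uc n c) (rho_c n c)"
  shows "\<exists>X. is_subcube n X \<and> Uc n c \<union> Vc n c = X \<and> Ec n c = induced_edges n X"
proof -
  have "idm (Uc n c) \<noteq> (\<lambda>_ _. 0)"
    using irr by (simp add: irreducible_def irreducible_on_def)
  then have "Uc n c \<noteq> {}"
    by (auto simp: idm_def fun_eq_iff)
  then obtain a where aU: "a \<in> Uc n c"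
    by blast
  then have a: "a < 2 ^ n"
    using Uc_imp_Uv by (auto simp: Uv_def)
  obtain j where "(a, j) \<in> Ec n c"
    using aU by (auto simp: Uc_iff)
  then obtain k where "k < n" "j = flip_bit k a"
    using Ec_imp_Ed Ed_flip_bit by blast
  then have "k \<in> edge_dirs n c a"
    using \<open>(a, j) \<in> Ec n c\<close> by (auto simp: edge_dirs_def c_adjacent_def)
  define X where "X = subcube_verts n (edge_dirs n c a) a"
  have closed: "edge_closed n c X" and edges: "induced_edges n X \<subseteq> Ec n c"
    and cover: "X \<subseteq> Uc n c \<union> Vc n c"
    using admissible_component_subcube[OF adm a] \<open>k \<in> edge_dirs n c a\<close> unfolding X_def by auto
  have "a \<in> X"
    using subcube_verts_self[OF a] unfolding X_def .
  then have verts: "Uc n c \<union> Vc n c = X"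
    using irreducible_rho_c_edge_closed[OF irr closed] aU cover by blast
  moreover have "Ec n c = induced_edges n X"
    using edges verts Ec_imp_Ed Ec_imp_Uc Ec_imp_Vc by (auto simp: induced_edges_def)
  moreover have "is_subcube n X"
    using a edge_dirs_less unfolding is_subcube_def X_def by blast
  ultimately show ?thesis
    by blast
qed

lemma irreducible_rho_c_iff:
  assumes "admissible n c"
  shows "irreducible n (Uc n c) (rho_c n c) \<longleftrightarrow>
    (\<exists>X. is_subcube n X \<and> Uc n c \<union> Vc n c = X \<and> Ec n c = induced_edges n X)"
proof
  assume "\<exists>X. is_subcube n X \<and> Uc n c \<union> Vc n c = X \<and> Ec n c = induced_edges n X"
  then obtain X where X: "is_subcube n X" "Uc n c \<union> Vc n c = X" "Ec n c = induced_edges n X"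
    by blast
  then obtain K a where Ka: "K \<subseteq> {..<n}" "a < 2 ^ n" "X = subcube_verts n K a"
    unfolding is_subcube_def by blast
  have closed: "edge_closed n c X"
    using X(3) by (auto simp: edge_closed_def induced_edges_def)
  moreover have "edge_connected n c X"
    using subcube_edge_connected[OF Ka(1,2)] X(3) Ka(3) by simp
  moreover have "X \<inter> Uc n c \<noteq> {}"
    using edge_closed_meets_Uc[OF closed, of a] subcube_verts_self[OF Ka(2)] Ka(3) X(2) by simp
  ultimately have "irreducible_on n (Uc n c) (idm (X \<inter> Uc n c)) (rho_c n c)"
    by (rule irreducible_on_edge_closed_connected)
  moreover have "X \<inter> Uc n c = Uc n c"
    using X(2) by blast
  ultimately show "irreducible n (Uc n c) (rho_c n c)"
    by (simp add: irreducible_def)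
qed (rule irreducible_rho_c_imp_subcube[OF assms])

section \<open>Unitary equivalence\<close>

lemma unit_equiv_rho_c_imp_Uc_eq:
  assumes "unit_equiv n (Uc n c) (rho_c n c) (Uc n d) (rho_c n d)"
  shows "Uc n d = Uc n c"
proof -
  let ?I = "Uc n c" and ?J = "Uc n d"
  obtain U where U: "mm ?J (adj U) U = idm ?I"
    and conj: "\<And>x. x \<in> verts n \<Longrightarrow> mm ?I (mm ?I U (rho_c n c x)) (adj U) = rho_c n d x"
    using assms unfolding unit_equiv_def by blast
  show ?thesis
  proof
    show "?I \<subseteq> ?J"
    proof
      fix u assume u: "u \<in> ?I"
      have "(\<Sum>k\<in>?J. cnj (U k u) * U k u) = 1"
        using fun_cong[OF fun_cong[OF U, of u], of u] u by (simp add: mm_def adj_def idm_def)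
      then have "(\<Sum>k\<in>?J. cnj (U k u) * U k u) \<noteq> 0"
        by simp
      then obtain k where "cnj (U k u) * U k u \<noteq> 0"
        by (rule sum.not_neutral_contains_not_neutral)
      moreover have "rho_c n d u = (\<lambda>a b. U a u * cnj (U b u))"
        using conj[OF Uc_imp_verts[OF u]] conj_idm_singleton[OF finite_Uc u, of U] u
        by (simp add: rho_c_Uc)
      ultimately have "rho_c n d u k k \<noteq> 0"
        by (simp add: mult.commute)
      then have "rho_c n d u \<noteq> (\<lambda>_ _. 0)"
        by auto
      moreover have "u \<notin> Vc n d"
        using Uc_imp_Uv[OF u] Vc_imp_Vv Uv_imp_not_Vv by blast
      ultimately show "u \<in> ?J"
        using rho_c_eq_0 by blast
    qed
    show "?J \<subseteq> ?I"
    proof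
      fix u assume u: "u \<in> ?J"
      show "u \<in> ?I"
      proof (rule ccontr)
        assume "u \<notin> ?I"
        moreover have "u \<notin> Vc n c"
          using Uc_imp_Uv[OF u] Vc_imp_Vv Uv_imp_not_Vv by blast
        ultimately have "rho_c n d u = mm ?I (mm ?I U (\<lambda>_ _. 0)) (adj U)"
          using conj[OF Uc_imp_verts[OF u]] by (simp add: rho_c_eq_0)
        then have "rho_c n d u u u = 0"
          by (simp add: mm_def)
        then show False
          using u by (simp add: rho_c_Uc idm_def)
      qed
    qed
  qed
qed

text \<open>A unitary intertwining \<open>\<rho>_c\<close> and \<open>\<rho>_d\<close> maps each coordinate projection \<open>E_uu = \<rho>_c(p_u)\<close>
  to itself, hence is diagonal.\<close>

lemma unit_equiv_rho_c_imp_diagonal: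
  assumes "unit_equiv n (Uc n c) (rho_c n c) (Uc n d) (rho_c n d)"
  obtains mu where "\<forall>a\<in>Uc n c. cmod (mu a) = 1"
    and "\<And>x. x \<in> verts n \<Longrightarrow> rho_c n d x =
      (\<lambda>a b. if a \<in> Uc n c \<and> b \<in> Uc n c then mu a * rho_c n c x a b * cnj (mu b) else 0)"
proof -
  let ?I = "Uc n c"
  have same: "Uc n d = ?I"
    by (rule unit_equiv_rho_c_imp_Uc_eq[OF assms])
  obtain U where support: "mat_on ?I ?I U"
    and conj: "\<And>x. x \<in> verts n \<Longrightarrow> mm ?I (mm ?I U (rho_c n c x)) (adj U) = rho_c n d x"
    using assms same unfolding unit_equiv_def by auto
  define mu where "mu a = U a a" for a
  have column: "U a u * cnj (U b u) = idm {u} a b" if "u \<in> ?I" for u a b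
  proof -
    have "(\<lambda>a b. U a u * cnj (U b u)) = rho_c n d u"
      using conj[OF Uc_imp_verts[OF that]] conj_idm_singleton[OF finite_Uc that, of U] that
      by (simp add: rho_c_Uc)
    then show ?thesis
      using that same by (simp add: rho_c_Uc fun_eq_iff)
  qed
  have "cmod (mu u) = 1" if "u \<in> ?I" for u
    using column[OF that, of u u] by (simp add: mu_def idm_def norm_eq_1_iff_mult_cnj)
  moreover have "U = diag_mat ?I mu"
  proof (intro ext)
    fix a b
    show "U a b = diag_mat ?I mu a b"
    proof (cases "b \<in> ?I \<and> a \<noteq> b")
      case True
      then have "U a b * cnj (U a b) = 0"
        using column[of b a a] by (simp add: idm_def)
      then show ?thesis
        using True by (simp add: diag_mat_def)
    qed (use support in \<open>auto simp: mat_on_def diag_mat_def mu_def\<close>)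
  qed
  moreover have "rho_c n d x =
      (\<lambda>a b. if a \<in> ?I \<and> b \<in> ?I then mu a * rho_c n c x a b * cnj (mu b) else 0)"
    if "x \<in> verts n" for x
    using conj[OF that] \<open>U = diag_mat ?I mu\<close> conj_diag_mat[OF finite_Uc, where m = mu] by simp
  ultimately show ?thesis
    using that by blast
qed

lemma unit_equiv_rho_c_imp_gauge:
  assumes "unit_equiv n (Uc n c) (rho_c n c) (Uc n d) (rho_c n d)"
  shows "Uc n d = Uc n c \<and> Vc n d = Vc n c \<and> Ec n d = Ec n c \<and>
    (\<exists>lam :: nat \<Rightarrow> complex. (\<forall>x\<in>Uc n c \<union> Vc n c. cmod (lam x) = 1) \<and>
      (\<forall>(i, j)\<in>Ec n c. d i j = lam i * lam j * c i j))"
proof -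
  let ?I = "Uc n c"
  have same: "Uc n d = ?I"
    by (rule unit_equiv_rho_c_imp_Uc_eq[OF assms])
  obtain mu where mu: "\<forall>a\<in>?I. cmod (mu a) = 1"
    and conj: "\<And>x. x \<in> verts n \<Longrightarrow> rho_c n d x =
      (\<lambda>a b. if a \<in> ?I \<and> b \<in> ?I then mu a * rho_c n c x a b * cnj (mu b) else 0)"
    using unit_equiv_rho_c_imp_diagonal[OF assms] by blast
  have "\<forall>j\<in>Vv n. \<exists>z. cmod z = 1 \<and> (\<forall>a. ce n d a j = z * (mu a * ce n c a j))"
  proof
    fix j assume j: "j \<in> Vv n"
    have "ce n d a j * cnj (ce n d b j) = mu a * ce n c a j * cnj (mu b * ce n c b j)" for a b
      using fun_cong[OF fun_cong[OF conj[of j], of a], of b] j same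
      by (auto simp: verts_def rho_c_Vv ce_eq_0_if_not_Uc)
    then obtain z where "cmod z = 1" "\<And>a. ce n d a j = z * (mu a * ce n c a j)"
      using outer_eq_imp_phase[where v = "\<lambda>a. ce n d a j" and w = "\<lambda>a. mu a * ce n c a j"]
      by blast
    then show "\<exists>z. cmod z = 1 \<and> (\<forall>a. ce n d a j = z * (mu a * ce n c a j))"
      by blast
  qed
  then obtain ph where ph: "\<forall>j\<in>Vv n. cmod (ph j) = 1 \<and> (\<forall>a. ce n d a j = ph j * (mu a * ce n c a j))"
    by (rule bchoice[THEN exE])
  have "(a, j) \<in> Ec n d \<longleftrightarrow> (a, j) \<in> Ec n c" for a j
  proof (cases "j \<in> Vv n")
    case True
    then have "ce n d a j \<noteq> 0 \<longleftrightarrow> ce n c a j \<noteq> 0"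
      using ph mu ce_eq_0_if_not_Uc[of a n c] by (cases "a \<in> ?I") auto
    then show ?thesis
      by (simp add: ce_nonzero_iff)
  qed (use Ec_imp_Ed Ed_imp_Uv_Vv in blast)
  then have edges: "Ec n d = Ec n c"
    by auto
  define lam where "lam x = (if x \<in> Vv n then ph x else mu x)" for x
  have "cmod (lam x) = 1" if "x \<in> ?I \<union> Vc n c" for x
    using that ph mu Uc_imp_Uv Vc_imp_Vv Uv_imp_not_Vv by (auto simp: lam_def)
  moreover have "d i j = lam i * lam j * c i j" if "(i, j) \<in> Ec n c" for i j
  proof -
    have "i \<in> Uv n" "j \<in> Vv n" "(i, j) \<in> Ed n"
      using that Ec_imp_Ed Ed_imp_Uv_Vv by blast+
    moreover have "ce n d i j = ph j * (mu i * ce n c i j)"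
      using ph \<open>j \<in> Vv n\<close> by blast
    ultimately show ?thesis
      using Uv_imp_not_Vv by (simp add: lam_def ce_def ac_simps)
  qed
  ultimately show ?thesis
    using same edges by (auto simp: Vc_def)
qed

lemma gauge_imp_unit_equiv_rho_c:
  assumes "Uc n d = Uc n c" "Vc n d = Vc n c" "Ec n d = Ec n c"
    and unit: "\<forall>x\<in>Uc n c \<union> Vc n c. cmod (lam x) = 1"
    and gauge: "\<forall>(i, j)\<in>Ec n c. d i j = lam i * lam j * c i j"
  shows "unit_equiv n (Uc n c) (rho_c n c) (Uc n d) (rho_c n d)"
  unfolding unit_equiv_def
proof (intro exI[of _ "diag_mat (Uc n c) lam"] conjI ballI)
  let ?I = "Uc n c" and ?D = "diag_mat (Uc n c) lam"
  have unit': "lam a * cnj (lam a) = 1" if "a \<in> ?I \<union> Vc n c" for a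
    using unit that norm_eq_1_iff_mult_cnj by blast
  have ce_d: "ce n d a x = (if a \<in> ?I then lam a * lam x * ce n c a x else 0)" for a x
    using assms(1,3) gauge ce_eq_0_if_not_Uc[of a n d] ce_nonzero_iff[of n c a x]
      ce_nonzero_iff[of n d a x]
    by (auto simp: ce_def)
  show "mat_on (Uc n d) ?I ?D"
    using assms(1) by (simp add: mat_on_def diag_mat_def)
  show "mm ?I ?D (adj ?D) = idm (Uc n d)" "mm (Uc n d) (adj ?D) ?D = idm ?I"
    using assms(1) diag_mat_unitary[OF finite_Uc] unit by simp_all
  fix x assume x: "x \<in> verts n"
  have conj: "mm ?I (mm ?I ?D (rho_c n c x)) (adj ?D) =
      (\<lambda>a b. if a \<in> ?I \<and> b \<in> ?I then lam a * rho_c n c x a b * cnj (lam b) else 0)"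
    using finite_Uc by (rule conj_diag_mat)
  have "x \<in> Uv n \<or> x \<in> Vv n"
    using x by (simp add: verts_def)
  then show "mm ?I (mm ?I ?D (rho_c n c x)) (adj ?D) = rho_c n d x"
  proof
    assume "x \<in> Uv n"
    then have "x \<notin> Vc n c" "x \<notin> Vc n d"
      using Vc_imp_Vv Uv_imp_not_Vv by blast+
    then show ?thesis
      unfolding conj using unit'[of x] assms(1)
      by (cases "x \<in> ?I") (auto simp: rho_c_Uc rho_c_eq_0 idm_def fun_eq_iff)
  next
    assume "x \<in> Vv n"
    then show ?thesis
      unfolding conj using unit'[of x] ce_eq_0_if_not_Vc[of x n c]
      by (cases "x \<in> Vc n c") (auto simp: rho_c_Vv ce_d fun_eq_iff)
  qed
qed

lemma unit_equiv_rho_c_iff: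
  "unit_equiv n (Uc n c) (rho_c n c) (Uc n d) (rho_c n d) \<longleftrightarrow>
    Uc n d = Uc n c \<and> Vc n d = Vc n c \<and> Ec n d = Ec n c \<and>
    (\<exists>lam :: nat \<Rightarrow> complex. (\<forall>x\<in>Uc n c \<union> Vc n c. cmod (lam x) = 1) \<and>
      (\<forall>(i, j)\<in>Ec n c. d i j = lam i * lam j * c i j))"
proof
  assume "unit_equiv n (Uc n c) (rho_c n c) (Uc n d) (rho_c n d)"
  then show "Uc n d = Uc n c \<and> Vc n d = Vc n c \<and> Ec n d = Ec n c \<and>
    (\<exists>lam :: nat \<Rightarrow> complex. (\<forall>x\<in>Uc n c \<union> Vc n c. cmod (lam x) = 1) \<and>
      (\<forall>(i, j)\<in>Ec n c. d i j = lam i * lam j * c i j))"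
    by (rule unit_equiv_rho_c_imp_gauge)
next
  assume gauge: "Uc n d = Uc n c \<and> Vc n d = Vc n c \<and> Ec n d = Ec n c \<and>
    (\<exists>lam :: nat \<Rightarrow> complex. (\<forall>x\<in>Uc n c \<union> Vc n c. cmod (lam x) = 1) \<and>
      (\<forall>(i, j)\<in>Ec n c. d i j = lam i * lam j * c i j))"
  then obtain lam :: "nat \<Rightarrow> complex" where "\<forall>x\<in>Uc n c \<union> Vc n c. cmod (lam x) = 1"
    and "\<forall>(i, j)\<in>Ec n c. d i j = lam i * lam j * c i j"
    by (elim conjE exE)
  with gauge show "unit_equiv n (Uc n c) (rho_c n c) (Uc n d) (rho_c n d)"
    by (elim conjE) (rule gauge_imp_unit_equiv_rho_c)
qed

section \<open>Rank-one representations\<close>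

lemma sum_eq_if_same_support:
  assumes "finite A" "finite B" "\<And>i. g i \<noteq> (0::complex) \<Longrightarrow> i \<in> A \<longleftrightarrow> i \<in> B"
  shows "sum g A = sum g B"
proof -
  have "sum g A = sum g (A \<inter> B)"
    by (rule sum.mono_neutral_right) (use assms in auto)
  also have "\<dots> = sum g B"
    by (rule sum.mono_neutral_left) (use assms in auto)
  finally show ?thesis .
qed

text \<open>A rank-one representation is given by unit vectors \<open>e_x\<close> with \<open>\<rho>(p_x) = e_x e_x\<^sup>*\<close>; the
  relations say that \<open>(e_u)_{u \<in> S}\<close> and \<open>(e_v)_{v \<in> T}\<close> are orthonormal bases of \<open>\<complex>^I\<close> and that
  vectors of non-adjacent vertices are orthogonal.\<close>

locale hypercube_frame =
  fixes n :: nat and I :: "'a set" and S T :: "nat set" and e :: "nat \<Rightarrow> 'a \<Rightarrow> complex"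
  assumes finite_I: "finite I"
    and S_Uv: "S \<subseteq> Uv n" and T_Vv: "T \<subseteq> Vv n"
    and unit: "\<And>x. x \<in> S \<union> T \<Longrightarrow> ip I (e x) (e x) = 1"
    and support: "\<And>x a. x \<in> S \<union> T \<Longrightarrow> a \<notin> I \<Longrightarrow> e x a = 0"
    and resolution_S: "\<And>a b. (\<Sum>s\<in>S. e s a * cnj (e s b)) = idm I a b"
    and resolution_T: "\<And>a b. (\<Sum>t\<in>T. e t a * cnj (e t b)) = idm I a b"
    and orthogonal: "\<And>i j. i \<in> S \<Longrightarrow> j \<in> T \<Longrightarrow> j \<notin> nbrs n i \<Longrightarrow> ip I (e j) (e i) = 0"
begin

lemma finite_S: "finite S"
  using S_Uv finite_Uv finite_subset by blast

lemma finite_T: "finite T"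
  using T_Vv finite_Vv finite_subset by blast

lemma orthonormal_S: "s \<in> S \<Longrightarrow> s' \<in> S \<Longrightarrow> ip I (e s) (e s') = (if s = s' then 1 else 0)"
  using orthonormal_if_resolution[OF finite_S finite_I resolution_S] unit by blast

lemma orthonormal_T: "t \<in> T \<Longrightarrow> t' \<in> T \<Longrightarrow> ip I (e t) (e t') = (if t = t' then 1 else 0)"
  using orthonormal_if_resolution[OF finite_T finite_I resolution_T] unit by blast

definition overlap :: "nat \<Rightarrow> nat \<Rightarrow> complex" where
  "overlap i j = (if i \<in> S \<and> j \<in> T then ip I (e j) (e i) else 0)"

lemma overlap_nonzero_imp:
  assumes "overlap i j \<noteq> 0"
  shows "i \<in> S" "j \<in> T" "(i, j) \<in> Ed n"
proof -
  show ij: "i \<in> S" "j \<in> T"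
    using assms by (auto simp: overlap_def split: if_splits)
  then have "j \<in> nbrs n i"
    using assms orthogonal by (auto simp: overlap_def)
  then show "(i, j) \<in> Ed n"
    using ij S_Uv by (auto simp: Ed_iff_nbrs)
qed

lemma Ec_overlap_iff: "(i, j) \<in> Ec n overlap \<longleftrightarrow> overlap i j \<noteq> 0"
  using overlap_nonzero_imp by (auto simp: Ec_def)

lemma ce_overlap: "ce n overlap i j = overlap i j"
  unfolding ce_def using overlap_nonzero_imp(3)[of i j] by auto

lemma Uc_overlap: "Uc n overlap = S"
proof
  show "Uc n overlap \<subseteq> S"
    using overlap_nonzero_imp by (auto simp: Uc_iff Ec_overlap_iff)
  show "S \<subseteq> Uc n overlap"
  proof
    fix i assume i: "i \<in> S"
    have "(\<Sum>j\<in>T. ip I (e j) (e i) * cnj (ip I (e j) (e i))) = 1"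
      using parseval[OF finite_I resolution_T] unit i by simp
    then obtain j where "j \<in> T" "ip I (e j) (e i) \<noteq> 0"
      by (metis (no_types, lifting) mult_zero_left sum.not_neutral_contains_not_neutral zero_neq_one)
    then show "i \<in> Uc n overlap"
      using i by (auto simp: Uc_iff Ec_overlap_iff overlap_def)
  qed
qed

lemma Vc_overlap: "Vc n overlap = T"
proof
  show "Vc n overlap \<subseteq> T"
    using overlap_nonzero_imp by (auto simp: Vc_iff Ec_overlap_iff)
  show "T \<subseteq> Vc n overlap"
  proof
    fix j assume j: "j \<in> T"
    have "(\<Sum>i\<in>S. ip I (e i) (e j) * cnj (ip I (e i) (e j))) = 1"
      using parseval[OF finite_I resolution_S] unit j by simp
    then obtain i where "i \<in> S" "ip I (e i) (e j) \<noteq> 0"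
      by (metis (no_types, lifting) mult_zero_left sum.not_neutral_contains_not_neutral zero_neq_one)
    then have "overlap i j \<noteq> 0"
      using j cnj_ip[of I "e i" "e j"] by (auto simp: overlap_def)
    then show "j \<in> Vc n overlap"
      by (auto simp: Vc_iff Ec_overlap_iff)
  qed
qed

text \<open>Admissibility of the overlaps is Parseval's identity for the two bases.\<close>

lemma admissible_overlap: "admissible n overlap"
  unfolding admissible_def Uc_overlap Vc_overlap
proof (intro conjI ballI)
  fix j1 j2 assume j: "j1 \<in> T" "j2 \<in> T"
  have "(\<Sum>i\<in>nbrs n j1 \<inter> nbrs n j2. overlap i j1 * cnj (overlap i j2)) =
      (\<Sum>i\<in>S. overlap i j1 * cnj (overlap i j2))"
    using finite_nbrs finite_S overlap_nonzero_imp
    by (intro sum_eq_if_same_support) (auto simp: nbrs_def)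
  also have "\<dots> = (\<Sum>i\<in>S. ip I (e i) (e j2) * cnj (ip I (e i) (e j1)))"
    using j by (intro sum.cong) (simp_all add: overlap_def cnj_ip ac_simps)
  also have "\<dots> = ip I (e j1) (e j2)"
    by (rule parseval[OF finite_I resolution_S])
  also have "\<dots> = (if j1 = j2 then 1 else 0)"
    using orthonormal_T j by simp
  finally show "(\<Sum>i\<in>nbrs n j1 \<inter> nbrs n j2. overlap i j1 * cnj (overlap i j2)) =
      (if j1 = j2 then 1 else 0)" .
next
  fix i1 i2 assume i: "i1 \<in> S" "i2 \<in> S"
  have "(\<Sum>j\<in>nbrs n i1 \<inter> nbrs n i2. overlap i1 j * cnj (overlap i2 j)) =
      (\<Sum>j\<in>T. overlap i1 j * cnj (overlap i2 j))"
    using finite_nbrs finite_T overlap_nonzero_imp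
    by (intro sum_eq_if_same_support) (auto simp: nbrs_def)
  also have "\<dots> = (\<Sum>j\<in>T. ip I (e j) (e i1) * cnj (ip I (e j) (e i2)))"
    using i by (intro sum.cong) (simp_all add: overlap_def)
  also have "\<dots> = ip I (e i2) (e i1)"
    by (rule parseval[OF finite_I resolution_T])
  also have "\<dots> = (if i1 = i2 then 1 else 0)"
    using orthonormal_S i by auto
  finally show "(\<Sum>j\<in>nbrs n i1 \<inter> nbrs n i2. overlap i1 j * cnj (overlap i2 j)) =
      (if i1 = i2 then 1 else 0)" .
qed

text \<open>The unitary \<open>\<complex>^I \<rightarrow> \<complex>^S\<close> taking coordinates in the basis \<open>(e_u)_{u\<in>S}\<close>.\<close>

definition coords :: "nat \<Rightarrow> 'a \<Rightarrow> complex" where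
  "coords u a = (if u \<in> S then cnj (e u a) else 0)"

lemma coords_apply: "(\<Sum>k\<in>I. coords u k * v k) = (if u \<in> S then ip I v (e u) else 0)"
  by (simp add: coords_def ip_def mult.commute)

lemma unit_equiv_overlap:
  assumes rho_frame: "\<And>x. x \<in> S \<union> T \<Longrightarrow> \<rho> x = (\<lambda>a b. e x a * cnj (e x b))"
    and rho_zero: "\<And>x. x \<in> verts n \<Longrightarrow> x \<notin> S \<union> T \<Longrightarrow> \<rho> x = (\<lambda>_ _. 0)"
  shows "unit_equiv n I \<rho> (Uc n overlap) (rho_c n overlap)"
  unfolding unit_equiv_def Uc_overlap
proof (intro exI[of _ coords] conjI ballI)
  show "mat_on S I coords"
    using support by (auto simp: mat_on_def coords_def)
  show "mm I coords (adj coords) = idm S"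
  proof (intro ext)
    fix u u'
    have "mm I coords (adj coords) u u' = (if u \<in> S \<and> u' \<in> S then ip I (e u') (e u) else 0)"
      unfolding mm_def adj_def coords_def ip_def by (auto simp: mult.commute)
    then show "mm I coords (adj coords) u u' = idm S u u'"
      using orthonormal_S by (auto simp: idm_def)
  qed
  show "mm S (adj coords) coords = idm I"
    using resolution_S by (simp add: fun_eq_iff mm_def adj_def coords_def)
  fix x assume x: "x \<in> verts n"
  show "mm I (mm I coords (\<rho> x)) (adj coords) = rho_c n overlap x"
  proof (cases "x \<in> S \<union> T")
    case True
    have conj: "mm I (mm I coords (\<rho> x)) (adj coords) = (\<lambda>a b.
        (if a \<in> S then ip I (e x) (e a) else 0) * cnj (if b \<in> S then ip I (e x) (e b) else 0))"
      unfolding rho_frame[OF True] conj_outer coords_apply ..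
    show ?thesis
    proof (cases "x \<in> S")
      case True
      then show ?thesis
        unfolding conj using orthonormal_S Uc_overlap
        by (auto simp: rho_c_Uc idm_def fun_eq_iff)
    next
      case False
      then have "x \<in> T" "x \<in> Vv n"
        using \<open>x \<in> S \<union> T\<close> T_Vv by auto
      then show ?thesis
        unfolding conj by (auto simp: rho_c_Vv ce_overlap overlap_def fun_eq_iff)
    qed
  next
    case False
    then show ?thesis
      using rho_zero[OF x] Uc_overlap Vc_overlap by (simp add: rho_c_eq_0 mm_def)
  qed
qed

end

lemma rank_one_rep_frame:
  assumes "finite I" and rep: "is_rank_one_rep n I \<rho>"
  obtains e where "hypercube_frame n I {u \<in> Uv n. \<rho> u \<noteq> (\<lambda>_ _. 0)} {v \<in> Vv n. \<rho> v \<noteq> (\<lambda>_ _. 0)} e"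
    and "\<And>x. x \<in> verts n \<Longrightarrow> \<rho> x \<noteq> (\<lambda>_ _. 0) \<Longrightarrow> \<rho> x = (\<lambda>a b. e x a * cnj (e x b))"
proof -
  define S where "S = {u \<in> Uv n. \<rho> u \<noteq> (\<lambda>_ _. 0)}"
  define T where "T = {v \<in> Vv n. \<rho> v \<noteq> (\<lambda>_ _. 0)}"
  have sum_U: "(\<lambda>a b. \<Sum>u\<in>Uv n. \<rho> u a b) = idm I" and sum_V: "(\<lambda>a b. \<Sum>v\<in>Vv n. \<rho> v a b) = idm I"
    and orth: "\<And>u v. u \<in> Uv n \<Longrightarrow> v \<in> Vv n \<Longrightarrow> v \<notin> nbrs n u \<Longrightarrow>
      mm I (\<rho> u) (\<rho> v) = (\<lambda>_ _. 0)"
    and rank_one: "\<And>x. x \<in> verts n \<Longrightarrow> \<rho> x \<noteq> (\<lambda>_ _. 0) \<Longrightarrow> is_rank_one_proj I (\<rho> x)"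
    using rep unfolding is_rank_one_rep_def is_rep_def by blast+
  have "ip I v v = 1" if "(\<Sum>a\<in>I. (cmod (v a))\<^sup>2) = 1" for v :: "'a \<Rightarrow> complex"
    by (simp only: ip_self that of_real_1)
  then have "\<forall>x\<in>{x \<in> verts n. \<rho> x \<noteq> (\<lambda>_ _. 0)}. \<exists>v. (\<forall>a. a \<notin> I \<longrightarrow> v a = 0) \<and>
      ip I v v = 1 \<and> \<rho> x = (\<lambda>a b. v a * cnj (v b))"
    using rank_one unfolding is_rank_one_proj_def by blast
  then obtain e where "\<forall>x\<in>{x \<in> verts n. \<rho> x \<noteq> (\<lambda>_ _. 0)}. (\<forall>a. a \<notin> I \<longrightarrow> e x a = 0) \<and>
      ip I (e x) (e x) = 1 \<and> \<rho> x = (\<lambda>a b. e x a * cnj (e x b))"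
    by (rule bchoice[THEN exE])
  then have e: "\<And>x. x \<in> verts n \<Longrightarrow> \<rho> x \<noteq> (\<lambda>_ _. 0) \<Longrightarrow>
      (\<forall>a. a \<notin> I \<longrightarrow> e x a = 0) \<and> ip I (e x) (e x) = 1 \<and> \<rho> x = (\<lambda>a b. e x a * cnj (e x b))"
    by blast
  have ST: "x \<in> verts n \<and> \<rho> x \<noteq> (\<lambda>_ _. 0)" if "x \<in> S \<union> T" for x
    using that by (auto simp: S_def T_def verts_def)
  have outer: "\<rho> x = (\<lambda>a b. e x a * cnj (e x b))" if "x \<in> verts n" "\<rho> x \<noteq> (\<lambda>_ _. 0)" for x
    using e[OF that] by blast
  have "hypercube_frame n I S T e"
  proof
    show "finite I" "S \<subseteq> Uv n" "T \<subseteq> Vv n"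
      using assms(1) by (auto simp: S_def T_def)
    show "ip I (e x) (e x) = 1" "a \<notin> I \<Longrightarrow> e x a = 0" if "x \<in> S \<union> T" for x a
      using e ST[OF that] by blast+
    show "(\<Sum>s\<in>S. e s a * cnj (e s b)) = idm I a b" for a b
      unfolding S_def using finite_Uv sum_U by (rule resolution_outer) (auto simp: verts_def intro: outer)
    show "(\<Sum>t\<in>T. e t a * cnj (e t b)) = idm I a b" for a b
      unfolding T_def using finite_Vv sum_V by (rule resolution_outer) (auto simp: verts_def intro: outer)
    show "ip I (e j) (e i) = 0" if "i \<in> S" "j \<in> T" "j \<notin> nbrs n i" for i j
    proof (rule outer_orthogonal)
      have i: "i \<in> verts n" "\<rho> i \<noteq> (\<lambda>_ _. 0)" and j: "j \<in> verts n" "\<rho> j \<noteq> (\<lambda>_ _. 0)"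
        using ST that(1,2) by blast+
      have "mm I (\<rho> i) (\<rho> j) = (\<lambda>_ _. 0)"
        using orth that unfolding S_def T_def by blast
      then show "mm I (\<lambda>a b. e i a * cnj (e i b)) (\<lambda>a b. e j a * cnj (e j b)) = (\<lambda>_ _. 0)"
        unfolding outer[OF i] outer[OF j] .
      show "ip I (e i) (e i) = 1" "ip I (e j) (e j) = 1"
        using e[OF i] e[OF j] by blast+
    qed
  qed
  then show ?thesis
    using that e unfolding S_def T_def by blast
qed

lemma rank_one_rep_equiv_rho_c:
  assumes "finite I" and "is_rank_one_rep n I \<rho>"
  shows "\<exists>d. admissible n d \<and> unit_equiv n I \<rho> (Uc n d) (rho_c n d)"
proof -
  define S where "S = {u \<in> Uv n. \<rho> u \<noteq> (\<lambda>_ _. 0)}"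
  define T where "T = {v \<in> Vv n. \<rho> v \<noteq> (\<lambda>_ _. 0)}"
  obtain e where frame: "hypercube_frame n I S T e"
    and rho: "\<And>x. x \<in> verts n \<Longrightarrow> \<rho> x \<noteq> (\<lambda>_ _. 0) \<Longrightarrow> \<rho> x = (\<lambda>a b. e x a * cnj (e x b))"
    using rank_one_rep_frame[OF assms] unfolding S_def T_def by blast
  have "unit_equiv n I \<rho> (Uc n (hypercube_frame.overlap I S T e)) (rho_c n (hypercube_frame.overlap I S T e))"
  proof (rule hypercube_frame.unit_equiv_overlap[OF frame])
    show "\<rho> x = (\<lambda>a b. e x a * cnj (e x b))" if "x \<in> S \<union> T" for x
      using rho that unfolding S_def T_def verts_def by blast
    show "\<rho> x = (\<lambda>_ _. 0)" if "x \<in> verts n" "x \<notin> S \<union> T" for x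
      using that unfolding S_def T_def verts_def by blast
  qed
  then show ?thesis
    using hypercube_frame.admissible_overlap[OF frame] by blast
qed

theorem lemma4p6:
  fixes n :: nat and c c' :: "nat \<Rightarrow> nat \<Rightarrow> complex"
  assumes "n \<ge> 1" and "admissible n c"
  shows
    "(\<forall>Xs. (\<forall>X\<in>Xs. is_subcube n X) \<and>
           (\<forall>X\<in>Xs. \<forall>Y\<in>Xs. X \<noteq> Y \<longrightarrow> X \<inter> Y = {}) \<and>
           Uc n c \<union> Vc n c = \<Union>Xs \<and>
           Ec n c = (\<Union>X\<in>Xs. induced_edges n X)
         \<longrightarrow> direct_sum_irred n (Uc n c) (rho_c n c) Xs)
     \<and> (irreducible n (Uc n c) (rho_c n c) \<longleftrightarrow>
         (\<exists>X. is_subcube n X \<and> Uc n c \<union> Vc n c = X \<and> Ec n c = induced_edges n X))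
     \<and> (admissible n c' \<longrightarrow>
         (unit_equiv n (Uc n c) (rho_c n c) (Uc n c') (rho_c n c') \<longleftrightarrow>
           Uc n c' = Uc n c \<and> Vc n c' = Vc n c \<and> Ec n c' = Ec n c \<and>
           (\<exists>lam :: nat \<Rightarrow> complex. (\<forall>x\<in>Uc n c \<union> Vc n c. cmod (lam x) = 1) \<and>
              (\<forall>(i, j)\<in>Ec n c. c' i j = lam i * lam j * c i j))))
     \<and> (\<forall>(I :: 'a set) \<rho>. finite I \<and> is_rank_one_rep n I \<rho> \<longrightarrow>
         (\<exists>d. admissible n d \<and> unit_equiv n I \<rho> (Uc n d) (rho_c n d)))"
  apply (intro conjI)
  subgoal
    by (intro allI impI, elim conjE, rule rho_c_direct_sum_irred)
  subgoal
    by (rule irreducible_rho_c_iff[OF assms(2)])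
  subgoal
    by (intro impI, rule unit_equiv_rho_c_iff)
  subgoal
    by (intro allI impI, elim conjE, rule rank_one_rep_equiv_rho_c)
  done

end
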